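(* Let $\phi\in C^1([0,\infty);[0,\infty))$ satisfy $\max_{r\ge0}\phi(r)=\phi(0)>0$ and $\max_{r\ge0}|r\phi(r)|=A_\infty$ for some constant $A_\infty>0$. Then for every $b>\frac{4}{\phi(0)}$ there exists a solution $v$ of $$r v''=v'\Big(1-v\,\phi\big(\tfrac{v}{r}\big)\Big),\quad r>0,\qquad v(0)=v'(0)=0,$$ such that $\lim_{r\to+\infty}v(r)=b$. *)

theory Defs
  imports "HOL-Analysis.Analysis"
begin

end

theory Submission
  imports Defs
begin

text \<open>Shooting in the parameter \<open>l \<ge> 0\<close>: if \<open>U\<close> solves \<open>t U'' = U' (1 - U phi (l U / t))\<close> with
  \<open>U(0) = U'(0) = 0\<close>, then \<open>v r = U (l r)\<close> solves the equation of the theorem. Writing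
  \<open>U t = t X t\<close>, the equation becomes the fixed point problem
  \<open>X r = (1/r) \<integral>\<^sub>0\<^sup>r 2 s exp (- \<integral>\<^sub>0\<^sup>s X phi (l X)) ds\<close>, solved by Banach's theorem with a Bielecki
  weight, which also gives Lipschitz dependence on \<open>l\<close>. The solution \<open>U\<close> is increasing. For
  \<open>l = 0\<close> a conserved quantity gives \<open>U \<le> 4 / phi 0 < b\<close>; a bounded \<open>U\<close> has supremum \<open>L\<close> with
  \<open>L phi 0 > 2\<close>, and if \<open>L < b\<close> a Lyapunov function keeps \<open>U\<close> below \<open>b\<close> for all nearby parameters.
  For large \<open>l\<close>, \<open>U\<close> exceeds \<open>b\<close>. The parameters with \<open>U\<close> exceeding \<open>b\<close>, resp. trapped below
  \<open>b\<close>, form disjoint nonempty open subsets of \<open>(0, \<infinity>)\<close>, so by connectedness some \<open>l > 0\<close> lies in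
  neither, and then \<open>U \<longlonglongrightarrow> b\<close>.\<close>

lemma DERIV_nonneg_imp_le:
  fixes g g' :: "real \<Rightarrow> real"
  assumes "a \<le> b" and "continuous_on {a..b} g"
    and "\<And>x. a < x \<Longrightarrow> x < b \<Longrightarrow> (g has_real_derivative g' x) (at x)"
    and "\<And>x. a < x \<Longrightarrow> x < b \<Longrightarrow> g' x \<ge> 0"
  shows "g a \<le> g b"
  using DERIV_nonneg_imp_increasing_open[of a b g] assms by blast

lemma abs_exp_minus_diff_le:
  fixes a b :: real
  assumes "0 \<le> a" "0 \<le> b"
  shows "\<bar>exp (- a) - exp (- b)\<bar> \<le> \<bar>a - b\<bar>"
proof -
  have ordered: "exp (- x) - exp (- y) \<le> y - x" if "0 \<le> x" "x \<le> y" for x y :: real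
  proof -
    have "1 + (x - y) \<le> exp (- (y - x))"
      using exp_ge_add_one_self[of "x - y"] by simp
    then have "1 - exp (- (y - x)) \<le> y - x" by linarith
    then have "exp (- x) * (1 - exp (- (y - x))) \<le> 1 * (y - x)"
      using that by (intro mult_mono) auto
    moreover have "exp (- x) * (1 - exp (- (y - x))) = exp (- x) - exp (- y)"
      by (simp add: algebra_simps flip: exp_add)
    ultimately show ?thesis by simp
  qed
  show ?thesis
    using ordered[of a b] ordered[of b a] assms by (cases "a \<le> b") (auto simp: abs_if)
qed

lemma integral_exp_affine:
  fixes \<beta> s C c :: real
  assumes "\<beta> > 0" "s \<ge> 0"
  shows "integral {0..s} (\<lambda>t. C * exp (\<beta> * t) + c) = C * (exp (\<beta> * s) - 1) / \<beta> + c * s"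
proof -
  have "((\<lambda>t. C * exp (\<beta> * t) + c) has_integral
      ((C * exp (\<beta> * s) / \<beta> + c * s) - (C * exp (\<beta> * 0) / \<beta> + c * 0))) {0..s}"
    using assms by (intro fundamental_theorem_of_calculus)
      (auto intro!: derivative_eq_intros
        simp: has_real_derivative_iff_has_vector_derivative[symmetric])
  then show ?thesis
    by (intro integral_unique) (simp add: algebra_simps diff_divide_distrib)
qed

lemma integral_double:
  fixes s :: real
  assumes "s \<ge> 0"
  shows "integral {0..s} (\<lambda>t. 2 * t) = s\<^sup>2"
proof -
  have "((\<lambda>t. 2 * t) has_integral (s\<^sup>2 - 0\<^sup>2)) {0..s}"
    using assms by (intro fundamental_theorem_of_calculus)
      (auto intro!: derivative_eq_intros
        simp: has_real_derivative_iff_has_vector_derivative[symmetric])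
  then show ?thesis by (intro integral_unique) simp
qed

lemma abs_integral_diff_le:
  fixes f g h :: "real \<Rightarrow> real"
  assumes "f integrable_on S" "g integrable_on S" "h integrable_on S"
    and "\<And>t. t \<in> S \<Longrightarrow> \<bar>f t - g t\<bar> \<le> h t"
  shows "\<bar>integral S f - integral S g\<bar> \<le> integral S h"
  using integral_norm_bound_integral[of "\<lambda>t. f t - g t" S h] integral_diff[of f S g] assms
  by (simp add: integrable_diff)

lemma at_within_atLeast_eq:
  fixes r a :: real
  assumes "a \<le> r" "r < c"
  shows "at r within {a..c} = at r within {a..}"
  by (rule at_within_nhd[of _ "{..<c}"]) (use assms in auto)

lemma continuous_on_atLeast_0I:
  assumes "\<And>R. R > 0 \<Longrightarrow> continuous_on {0..R} f"
  shows "continuous_on {0::real..} f"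
  unfolding continuous_on_eq_continuous_within
proof
  fix t :: real assume "t \<in> {0..}"
  then have "continuous (at t within {0..t+1}) f"
    using assms[of "t+1"] by (simp add: continuous_on_eq_continuous_within)
  then show "continuous (at t within {0..}) f"
    using at_within_atLeast_eq[of 0 t "t+1"] \<open>t \<in> {0..}\<close> by simp
qed

lemma eventually_at_within_imp_ball:
  assumes "eventually P (at x within S)" "P x"
  shows "\<exists>d>0. \<forall>y\<in>S. dist y x < d \<longrightarrow> P y"
  using assms unfolding eventually_at by metis

lemma open_Collect_pos:
  fixes P :: "real \<Rightarrow> bool"
  assumes "\<And>l. l > 0 \<Longrightarrow> P l \<Longrightarrow> eventually P (at l within {0..})"
  shows "open {l. l > 0 \<and> P l}"
  unfolding open_dist
proof
  fix l assume "l \<in> {l. l > 0 \<and> P l}"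
  then have l: "l > 0" "P l" by auto
  then obtain d where d: "d > 0" "\<And>y. y \<ge> 0 \<Longrightarrow> dist y l < d \<Longrightarrow> P y"
    using eventually_at_within_imp_ball[OF assms[OF l] l(2)] by auto
  show "\<exists>e>0. \<forall>y. dist y l < e \<longrightarrow> y \<in> {l. l > 0 \<and> P l}"
    using d l by (intro exI[of _ "min d l"]) (auto simp: dist_real_def)
qed

lemma C1_imp_lipschitz_on_Icc:
  fixes f f' :: "real \<Rightarrow> real"
  assumes deriv: "\<And>r. r \<ge> 0 \<Longrightarrow> (f has_real_derivative f' r) (at r within {0..})"
    and cont: "continuous_on {0..} f'"
  shows "\<exists>M. M-lipschitz_on {0..S} f"
proof -
  have "compact (f' ` {0..S})"
    by (rule compact_continuous_image) (use cont in \<open>auto intro: continuous_on_subset\<close>)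
  then have "bounded (f' ` {0..S})" by (rule compact_imp_bounded)
  then obtain B where "\<forall>y\<in>f' ` {0..S}. norm y \<le> B"
    unfolding bounded_iff by blast
  then have B: "\<And>x. x \<in> {0..S} \<Longrightarrow> \<bar>f' x\<bar> \<le> B" by auto
  have "(max B 0)-lipschitz_on {0..S} f"
  proof (rule lipschitz_onI)
    fix x y assume xy: "x \<in> {0..S}" "y \<in> {0..S}"
    have "norm (f x - f y) \<le> max B 0 * norm (x - y)"
    proof (rule field_differentiable_bound[of "{0..S}" f f'])
      fix z assume z: "z \<in> {0..S}"
      show "(f has_field_derivative f' z) (at z within {0..S})"
        using z by (intro DERIV_subset[OF deriv]) auto
      show "norm (f' z) \<le> max B 0" using B[OF z] by simp
    qed (use xy in auto)
    then show "dist (f x) (f y) \<le> max B 0 * dist x y" by (simp add: dist_norm)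
  qed simp
  then show ?thesis by blast
qed

lemma continuous_on_clamp [continuous_intros]:
  fixes f :: "'a::topological_space \<Rightarrow> 'b::euclidean_space"
  assumes "continuous_on S f"
  shows "continuous_on S (\<lambda>x. clamp a b (f x))"
  using continuous_on_compose[OF assms clamp_continuous_on[of a b "\<lambda>x. x" "f ` S"]]
  by (simp add: o_def)

lemma clamp_real_in_Icc: "(0::real) \<le> R \<Longrightarrow> clamp 0 R t \<in> {0..R}"
  using clamp_in_interval[of 0 R t] by simp

lemma clamp_real_id: "t \<in> {0..R} \<Longrightarrow> clamp 0 R t = (t::real)"
  by (simp add: clamp_def)

lemma abs_clamp_diff_le: "\<bar>clamp 0 R a - clamp 0 R b\<bar> \<le> \<bar>a - (b::real)\<bar>"
  using dist_clamps_le_dist_args[of 0 R a b] by (simp add: dist_real_def)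

lemma exists_sq_factor:
  fixes k P :: real
  assumes "0 < k" "k < P"
  shows "\<exists>\<theta>. 0 < \<theta> \<and> \<theta> < 1 \<and> \<theta> * \<theta> * P = k"
proof -
  have q: "0 < k / P" "k / P < 1" and "P > 0" using assms by auto
  then have "sqrt (k / P) * sqrt (k / P) = k / P"
    using assms real_sqrt_mult_self[of "k / P"] by simp
  then show ?thesis
    using q assms by (intro exI[of _ "sqrt (k / P)"]) (simp add: real_sqrt_lt_1_iff field_simps)
qed

locale shooting =
  fixes phi :: "real \<Rightarrow> real" and A :: real
  assumes lipschitz_phi: "\<And>S. \<exists>M. M-lipschitz_on {0..S} phi"
    and phi_nonneg: "\<And>r. r \<ge> 0 \<Longrightarrow> phi r \<ge> 0"
    and phi_le_phi0: "\<And>r. r \<ge> 0 \<Longrightarrow> phi r \<le> phi 0"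
    and phi0_pos: "phi 0 > 0"
    and r_phi_le: "\<And>r. r \<ge> 0 \<Longrightarrow> r * phi r \<le> A"
begin

lemma continuous_on_phi: "continuous_on {0..} phi"
  using lipschitz_phi lipschitz_on_continuous_on by (intro continuous_on_atLeast_0I) blast

definition lip_const :: "real \<Rightarrow> real" where
  "lip_const S = (SOME M. M-lipschitz_on {0..S} phi)"

lemma lipschitz_on_lip_const: "(lip_const S)-lipschitz_on {0..S} phi"
  unfolding lip_const_def by (rule someI_ex[OF lipschitz_phi])

lemma lip_const_nonneg: "lip_const S \<ge> 0"
  using lipschitz_on_lip_const unfolding lipschitz_on_def by blast

lemma abs_phi_diff_le:
  "y \<in> {0..S} \<Longrightarrow> z \<in> {0..S} \<Longrightarrow> \<bar>phi y - phi z\<bar> \<le> lip_const S * \<bar>y - z\<bar>"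
  using lipschitz_onD[OF lipschitz_on_lip_const] by (simp add: dist_real_def)

subsection \<open>The truncated integral equation\<close>

text \<open>The rate \<open>x phi (l x)\<close> is truncated by clamping \<open>x\<close> to \<open>[0, R]\<close>; this makes it
  globally Lipschitz and does not affect solutions, which satisfy \<open>0 \<le> x t \<le> t\<close>.\<close>

definition trunc_rate :: "real \<Rightarrow> real \<Rightarrow> real \<Rightarrow> real" where
  "trunc_rate l R a = clamp 0 R a * phi (l * clamp 0 R a)"

definition rate_lip :: "real \<Rightarrow> real \<Rightarrow> real" where
  "rate_lip L R = phi 0 + R * L * lip_const (L * R)"

definition damping :: "real \<Rightarrow> real \<Rightarrow> (real \<Rightarrow> real) \<Rightarrow> real \<Rightarrow> real" where
  "damping l R x s = exp (- integral {0..s} (\<lambda>t. trunc_rate l R (x t)))"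

definition picard :: "real \<Rightarrow> real \<Rightarrow> (real \<Rightarrow> real) \<Rightarrow> real \<Rightarrow> real" where
  "picard l R x r = (if r \<le> 0 then 0 else integral {0..r} (\<lambda>s. 2 * s * damping l R x s) / r)"

lemma trunc_rate_eq: "a \<in> {0..R} \<Longrightarrow> trunc_rate l R a = a * phi (l * a)"
  by (simp add: trunc_rate_def clamp_real_id)

lemma continuous_on_trunc_rate_comp:
  assumes "l \<ge> 0" "R \<ge> 0" "continuous_on S x"
  shows "continuous_on S (\<lambda>t. trunc_rate l R (x t))"
proof -
  have "continuous_on S (\<lambda>t. phi (l * clamp 0 R (x t)))"
    by (rule continuous_on_compose2[OF continuous_on_phi])
      (use assms clamp_real_in_Icc in \<open>auto intro!: continuous_intros\<close>)
  then show ?thesis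
    unfolding trunc_rate_def using assms(3) by (intro continuous_intros)
qed

lemma trunc_rate_bounds:
  assumes "l \<ge> 0" "R \<ge> 0"
  shows "0 \<le> trunc_rate l R a" "trunc_rate l R a \<le> R * phi 0"
proof -
  have c: "clamp 0 R a \<in> {0..R}" using clamp_real_in_Icc assms by blast
  then have "0 \<le> phi (l * clamp 0 R a)" "phi (l * clamp 0 R a) \<le> phi 0"
    using phi_nonneg phi_le_phi0 assms by auto
  then show "0 \<le> trunc_rate l R a" "trunc_rate l R a \<le> R * phi 0"
    unfolding trunc_rate_def using c by (auto intro: mult_mono)
qed

lemma rate_lip_nonneg: "L \<ge> 0 \<Longrightarrow> R \<ge> 0 \<Longrightarrow> rate_lip L R \<ge> 0"
  unfolding rate_lip_def using lip_const_nonneg[of "L * R"] phi0_pos by simp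

lemma trunc_rate_lipschitz:
  assumes l: "l \<in> {0..L}" and m: "m \<in> {0..L}" and R: "R \<ge> 0"
  shows "\<bar>trunc_rate l R a - trunc_rate m R b\<bar>
    \<le> rate_lip L R * \<bar>a - b\<bar> + R * R * lip_const (L * R) * \<bar>l - m\<bar>"
proof -
  define c where "c = clamp 0 R a"
  define d where "d = clamp 0 R b"
  define M where "M = lip_const (L * R)"
  have c: "c \<in> {0..R}" and d: "d \<in> {0..R}" using clamp_real_in_Icc R c_def d_def by blast+
  have cd: "\<bar>c - d\<bar> \<le> \<bar>a - b\<bar>" using abs_clamp_diff_le c_def d_def by blast
  have M: "M \<ge> 0" using lip_const_nonneg M_def by simp
  have lc: "l * c \<in> {0..L*R}" and md: "m * d \<in> {0..L*R}"
    using l m c d by (auto intro: mult_mono)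
  have phi_lc: "0 \<le> phi (l*c)" "phi (l*c) \<le> phi 0" using phi_le_phi0 phi_nonneg lc by auto
  have "\<bar>l*c - m*d\<bar> = \<bar>l*(c-d) + d*(l-m)\<bar>" by (simp add: algebra_simps)
  also have "\<dots> \<le> \<bar>l\<bar>*\<bar>c-d\<bar> + \<bar>d\<bar>*\<bar>l-m\<bar>" by (simp add: abs_mult[symmetric] abs_triangle_ineq)
  also have "\<dots> \<le> L * \<bar>a - b\<bar> + R * \<bar>l - m\<bar>"
    using l d cd by (intro add_mono mult_mono) auto
  finally have arg_diff: "\<bar>l*c - m*d\<bar> \<le> L * \<bar>a - b\<bar> + R * \<bar>l - m\<bar>" .
  have "\<bar>phi (l*c) - phi (m*d)\<bar> \<le> M * \<bar>l*c - m*d\<bar>"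
    using abs_phi_diff_le[OF lc md] unfolding M_def .
  also have "\<dots> \<le> M * (L * \<bar>a - b\<bar> + R * \<bar>l - m\<bar>)"
    using arg_diff M by (rule mult_left_mono)
  finally have phi_diff: "\<bar>phi (l*c) - phi (m*d)\<bar> \<le> M * (L * \<bar>a - b\<bar> + R * \<bar>l - m\<bar>)" .
  have "\<bar>trunc_rate l R a - trunc_rate m R b\<bar> = \<bar>(c - d) * phi (l*c) + d * (phi (l*c) - phi (m*d))\<bar>"
    unfolding trunc_rate_def c_def[symmetric] d_def[symmetric] by (simp add: algebra_simps)
  also have "\<dots> \<le> \<bar>c - d\<bar> * phi (l*c) + d * \<bar>phi (l*c) - phi (m*d)\<bar>"
    using phi_lc d abs_triangle_ineq[of "(c - d) * phi (l*c)" "d * (phi (l*c) - phi (m*d))"]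
    by (simp add: abs_mult)
  also have "\<dots> \<le> \<bar>a - b\<bar> * phi 0 + R * (M * (L * \<bar>a - b\<bar> + R * \<bar>l - m\<bar>))"
    using cd phi_lc d R M phi_diff by (intro add_mono mult_mono) auto
  also have "\<dots> = rate_lip L R * \<bar>a - b\<bar> + R * R * M * \<bar>l - m\<bar>"
    unfolding rate_lip_def M_def by (simp add: algebra_simps)
  finally show ?thesis unfolding M_def .
qed

lemma integrable_trunc_rate_comp:
  assumes "l \<ge> 0" "R \<ge> 0" "continuous_on {0..R} x" "s \<le> R"
  shows "(\<lambda>t. trunc_rate l R (x t)) integrable_on {0..s}"
  using assms
  by (intro integrable_continuous_interval continuous_on_trunc_rate_comp)
    (auto intro: continuous_on_subset)

lemma continuous_on_damping:
  assumes "l \<ge> 0" "R \<ge> 0" "continuous_on {0..R} x"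
  shows "continuous_on {0..R} (damping l R x)"
proof -
  have "continuous_on {0..R} (\<lambda>s. integral {0..s} (\<lambda>t. trunc_rate l R (x t)))"
    using assms by (intro indefinite_integral_continuous_1 integrable_trunc_rate_comp) auto
  then show ?thesis unfolding damping_def by (intro continuous_intros)
qed

lemma damping_bounds:
  assumes "l \<ge> 0" "R \<ge> 0" "continuous_on {0..R} x" "s \<in> {0..R}"
  shows "0 < damping l R x s" "damping l R x s \<le> 1"
proof -
  have "integral {0..s} (\<lambda>t. trunc_rate l R (x t)) \<ge> 0"
    using assms trunc_rate_bounds by (intro integral_nonneg integrable_trunc_rate_comp) auto
  then show "0 < damping l R x s" "damping l R x s \<le> 1" unfolding damping_def by auto
qed

lemma integrable_picard_integrand:
  assumes "l \<ge> 0" "R \<ge> 0" "continuous_on {0..R} x" "r \<le> R"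
  shows "(\<lambda>s. 2 * s * damping l R x s) integrable_on {0..r}"
  using continuous_on_damping[OF assms(1-3)] assms(4)
  by (intro integrable_continuous_interval continuous_intros) (auto intro: continuous_on_subset)

lemma picard_integral_bounds:
  assumes "l \<ge> 0" "R \<ge> 0" "continuous_on {0..R} x" "r \<in> {0..R}"
  shows "0 \<le> integral {0..r} (\<lambda>s. 2 * s * damping l R x s)"
    and "integral {0..r} (\<lambda>s. 2 * s * damping l R x s) \<le> r\<^sup>2"
proof -
  have int: "(\<lambda>s. 2 * s * damping l R x s) integrable_on {0..r}"
    using integrable_picard_integrand assms by auto
  have E: "0 < damping l R x s" "damping l R x s \<le> 1" if "s \<in> {0..r}" for s
    using damping_bounds[OF assms(1-3)] that assms(4) by auto
  show "0 \<le> integral {0..r} (\<lambda>s. 2 * s * damping l R x s)"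
  proof (rule integral_nonneg[OF int])
    fix s assume "s \<in> {0..r}"
    then show "0 \<le> 2 * s * damping l R x s" using E(1)[of s] by simp
  qed
  have "integral {0..r} (\<lambda>s. 2 * s * damping l R x s) \<le> integral {0..r} (\<lambda>s. 2 * s)"
    using E(2)
    by (intro integral_le int integrable_continuous_interval continuous_intros)
      (auto simp: mult_left_le)
  then show "integral {0..r} (\<lambda>s. 2 * s * damping l R x s) \<le> r\<^sup>2"
    using integral_double assms(4) by simp
qed

lemma picard_bounds:
  assumes "l \<ge> 0" "R \<ge> 0" "continuous_on {0..R} x" "r \<in> {0..R}"
  shows "0 \<le> picard l R x r" "picard l R x r \<le> r"
  using picard_integral_bounds[OF assms] assms(4)
  by (auto simp: picard_def divide_le_eq power2_eq_square)

lemma continuous_on_picard: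
  assumes "l \<ge> 0" "R \<ge> 0" "continuous_on {0..R} x"
  shows "continuous_on {0..R} (picard l R x)"
  unfolding continuous_on_eq_continuous_within
proof
  fix r assume r: "r \<in> {0..R}"
  define I where "I = (\<lambda>r. integral {0..r} (\<lambda>s. 2 * s * damping l R x s))"
  have I: "continuous_on {0..R} I"
    unfolding I_def using assms
    by (intro indefinite_integral_continuous_1 integrable_picard_integrand) auto
  show "continuous (at r within {0..R}) (picard l R x)"
  proof (cases "r = 0")
    case False
    then have "r > 0" using r by auto
    have "continuous (at r within {0..R}) (\<lambda>r. I r / r)"
      using I r \<open>r > 0\<close> by (intro continuous_intros) (auto simp: continuous_on_eq_continuous_within)
    then show ?thesis
      by (rule continuous_transform_within[OF _ \<open>r > 0\<close> r])
        (auto simp: picard_def I_def dist_real_def)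
  next
    case True
    have "(picard l R x \<longlongrightarrow> 0) (at 0 within {0..R})"
    proof (rule tendsto_sandwich[of "\<lambda>_. 0" _ _ "\<lambda>t. t"])
      show "\<forall>\<^sub>F t in at 0 within {0..R}. 0 \<le> picard l R x t"
        and "\<forall>\<^sub>F t in at 0 within {0..R}. picard l R x t \<le> t"
        using picard_bounds[OF assms] by (auto simp: eventually_at_filter)
    qed (auto intro: tendsto_ident_at[THEN tendsto_eq_rhs])
    then show ?thesis using True by (simp add: continuous_within picard_def)
  qed
qed

lemma abs_damping_diff_le:
  assumes l: "l \<in> {0..L}" and m: "m \<in> {0..L}" and R: "R > 0" and \<beta>: "\<beta> > 0"
    and x: "continuous_on {0..R} x" and y: "continuous_on {0..R} y"
    and d: "\<And>t. t \<in> {0..R} \<Longrightarrow> \<bar>x t - y t\<bar> \<le> exp (\<beta> * t) * d"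
    and s: "s \<in> {0..R}"
  shows "\<bar>damping l R x s - damping m R y s\<bar>
    \<le> rate_lip L R * d * exp (\<beta> * s) / \<beta> + R * R * lip_const (L * R) * \<bar>l - m\<bar> * s"
proof -
  define K where "K = rate_lip L R"
  define c where "c = R * R * lip_const (L * R) * \<bar>l - m\<bar>"
  have K: "K \<ge> 0" using rate_lip_nonneg l R K_def c_def by simp
  have "\<bar>x 0 - y 0\<bar> \<le> d" using d[of 0] R by simp
  then have "d \<ge> 0" by linarith
  note ints = integrable_trunc_rate_comp[of l R x s] integrable_trunc_rate_comp[of m R y s]
  have int_bound: "(\<lambda>t. K * d * exp (\<beta> * t) + c) integrable_on {0..s}"
    by (intro integrable_continuous_interval continuous_intros)
  have "\<bar>damping l R x s - damping m R y s\<bar>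
    \<le> \<bar>integral {0..s} (\<lambda>t. trunc_rate l R (x t)) - integral {0..s} (\<lambda>t. trunc_rate m R (y t))\<bar>"
    unfolding damping_def using ints l m R s x y trunc_rate_bounds
    by (intro abs_exp_minus_diff_le integral_nonneg) auto
  also have "\<dots> \<le> integral {0..s} (\<lambda>t. K * d * exp (\<beta> * t) + c)"
  proof (rule abs_integral_diff_le)
    fix t assume t: "t \<in> {0..s}"
    have "\<bar>trunc_rate l R (x t) - trunc_rate m R (y t)\<bar> \<le> K * \<bar>x t - y t\<bar> + c"
      unfolding K_def c_def using trunc_rate_lipschitz[OF l m] R by simp
    also have "\<dots> \<le> K * d * exp (\<beta> * t) + c"
      using d[of t] t s K by (simp add: mult.assoc mult.commute mult_left_mono)
    finally show "\<bar>trunc_rate l R (x t) - trunc_rate m R (y t)\<bar> \<le> K * d * exp (\<beta> * t) + c" .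
  qed (use ints int_bound l m R s x y in auto)
  also have "\<dots> = K * d * (exp (\<beta> * s) - 1) / \<beta> + c * s"
    using integral_exp_affine \<beta> s by simp
  also have "\<dots> \<le> K * d * exp (\<beta> * s) / \<beta> + c * s"
    using K \<open>d \<ge> 0\<close> \<beta> by (intro add_right_mono divide_right_mono mult_left_mono) auto
  finally show ?thesis unfolding K_def c_def .
qed

lemma abs_picard_diff_le_damping:
  assumes l: "l \<ge> 0" and m: "m \<ge> 0" and R: "R \<ge> 0"
    and x: "continuous_on {0..R} x" and y: "continuous_on {0..R} y" and r: "r \<in> {0..R}"
    and C: "\<And>s. s \<in> {0..r} \<Longrightarrow> \<bar>damping l R x s - damping m R y s\<bar> \<le> C"
  shows "\<bar>picard l R x r - picard m R y r\<bar> \<le> r * C"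
proof (cases "r = 0")
  case True then show ?thesis by (simp add: picard_def)
next
  case False
  then have "r > 0" using r by auto
  have int_bound: "(\<lambda>s. 2 * s * C) integrable_on {0..r}"
    by (intro integrable_continuous_interval continuous_intros)
  have "\<bar>integral {0..r} (\<lambda>s. 2 * s * damping l R x s)
      - integral {0..r} (\<lambda>s. 2 * s * damping m R y s)\<bar>
    \<le> integral {0..r} (\<lambda>s. 2 * s * C)"
  proof (rule abs_integral_diff_le)
    fix s assume s: "s \<in> {0..r}"
    then show "\<bar>2 * s * damping l R x s - 2 * s * damping m R y s\<bar> \<le> 2 * s * C"
      using C[OF s] by (simp add: abs_mult mult_left_mono flip: right_diff_distrib)
  qed (use r l m R x y int_bound integrable_picard_integrand[of l R x r]
        integrable_picard_integrand[of m R y r] in auto)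
  also have "\<dots> = r\<^sup>2 * C"
    using integral_double[of r] r integral_mult_left[of "{0..r}" "\<lambda>s. 2 * s" C] by simp
  finally show ?thesis
    using \<open>r > 0\<close>
    by (simp add: picard_def power2_eq_square abs_div pos_divide_le_eq mult_ac
        flip: diff_divide_distrib)
qed

lemma abs_picard_diff_le:
  assumes l: "l \<in> {0..L}" and m: "m \<in> {0..L}" and R: "R > 0" and \<beta>: "\<beta> > 0"
    and x: "continuous_on {0..R} x" and y: "continuous_on {0..R} y"
    and d: "\<And>t. t \<in> {0..R} \<Longrightarrow> \<bar>x t - y t\<bar> \<le> exp (\<beta> * t) * d"
    and r: "r \<in> {0..R}"
  shows "\<bar>picard l R x r - picard m R y r\<bar>
    \<le> r * (rate_lip L R * d * exp (\<beta> * r) / \<beta> + R * R * R * lip_const (L * R) * \<bar>l - m\<bar>)"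
proof (rule abs_picard_diff_le_damping)
  have "\<bar>x 0 - y 0\<bar> \<le> d" using d[of 0] R by simp
  then have "d \<ge> 0" by linarith
  fix s assume s: "s \<in> {0..r}"
  have "\<bar>damping l R x s - damping m R y s\<bar>
    \<le> rate_lip L R * d * exp (\<beta> * s) / \<beta> + R * R * lip_const (L * R) * \<bar>l - m\<bar> * s"
    using s r by (intro abs_damping_diff_le[OF l m R \<beta> x y d]) auto
  also have "\<dots> \<le> rate_lip L R * d * exp (\<beta> * r) / \<beta> + R * R * R * lip_const (L * R) * \<bar>l - m\<bar>"
  proof -
    have "rate_lip L R * d * exp (\<beta> * s) / \<beta> \<le> rate_lip L R * d * exp (\<beta> * r) / \<beta>"
      using s \<beta> \<open>d \<ge> 0\<close> rate_lip_nonneg[of L R] l R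
      by (intro divide_right_mono mult_left_mono) auto
    moreover have "R * R * lip_const (L * R) * \<bar>l - m\<bar> * s
        \<le> R * R * lip_const (L * R) * \<bar>l - m\<bar> * R"
      using s r R lip_const_nonneg[of "L * R"] by (intro mult_left_mono) auto
    ultimately show ?thesis by (simp add: mult_ac)
  qed
  finally show "\<bar>damping l R x s - damping m R y s\<bar>
    \<le> rate_lip L R * d * exp (\<beta> * r) / \<beta> + R * R * R * lip_const (L * R) * \<bar>l - m\<bar>" .
qed (use l m R x y r in auto)

subsection \<open>Solution of the truncated equation by a weighted contraction\<close>

text \<open>Bielecki's trick: for \<open>y t = exp (- \<beta> * t) * x t\<close> the Picard map becomes a contraction
  with constant \<open>1/2\<close> in the sup norm once \<open>\<beta> = bielecki_rate L R\<close>. Clamping the argument to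
  \<open>[0, R]\<close> turns functions on \<open>[0, R]\<close> into bounded continuous functions on the whole line.\<close>

definition unweight :: "real \<Rightarrow> real \<Rightarrow> (real \<Rightarrow> real) \<Rightarrow> real \<Rightarrow> real" where
  "unweight \<beta> R y = (\<lambda>s. exp (\<beta> * clamp 0 R s) * y s)"

definition weighted_picard :: "real \<Rightarrow> real \<Rightarrow> real \<Rightarrow> (real \<Rightarrow> real) \<Rightarrow> real \<Rightarrow> real" where
  "weighted_picard l R \<beta> y =
    (\<lambda>t. exp (- \<beta> * clamp 0 R t) * picard l R (unweight \<beta> R y) (clamp 0 R t))"

definition picard_bcontfun :: "real \<Rightarrow> real \<Rightarrow> real \<Rightarrow> (real \<Rightarrow>\<^sub>C real) \<Rightarrow> (real \<Rightarrow>\<^sub>C real)" where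
  "picard_bcontfun l R \<beta> y = Bcontfun (weighted_picard l R \<beta> (apply_bcontfun y))"

definition bielecki_rate :: "real \<Rightarrow> real \<Rightarrow> real" where
  "bielecki_rate L R = 2 * R * rate_lip L R + 1"

definition picard_fixed :: "real \<Rightarrow> real \<Rightarrow> (real \<Rightarrow> real) \<Rightarrow> bool" where
  "picard_fixed l R x \<longleftrightarrow> continuous_on {0..R} x \<and> (\<forall>r\<in>{0..R}. x r = picard l R x r)"

lemma abs_exp_minus_mult_le:
  fixes \<beta> t p R :: real
  assumes "\<beta> \<ge> 0" "t \<ge> 0" "0 \<le> p" "p \<le> R"
  shows "\<bar>exp (- \<beta> * t) * p\<bar> \<le> R"
  using assms mult_mono[of "exp (- \<beta> * t)" 1 p R] by simp

lemma continuous_on_unweight: "continuous_on UNIV y \<Longrightarrow> continuous_on S (unweight \<beta> R y)"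
  unfolding unweight_def by (intro continuous_intros) (auto intro: continuous_on_subset)

lemma weighted_picard_in_bcontfun:
  assumes l: "l \<ge> 0" and R: "R > 0" and \<beta>: "\<beta> \<ge> 0" and y: "continuous_on UNIV y"
  shows "weighted_picard l R \<beta> y \<in> bcontfun"
proof (rule bcontfun_normI)
  have x: "continuous_on {0..R} (unweight \<beta> R y)" by (rule continuous_on_unweight[OF y])
  show "continuous_on UNIV (weighted_picard l R \<beta> y)"
    unfolding weighted_picard_def using R clamp_real_in_Icc
    by (intro continuous_intros continuous_on_compose2[OF continuous_on_picard[OF l _ x]]) auto
  fix t
  have c: "clamp 0 R t \<in> {0..R}" using clamp_real_in_Icc R by auto
  show "norm (weighted_picard l R \<beta> y t) \<le> R"
    unfolding weighted_picard_def real_norm_def using picard_bounds[OF l _ x c] c R \<beta>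
    by (intro abs_exp_minus_mult_le) auto
qed

lemma apply_picard_bcontfun:
  assumes "l \<ge> 0" "R > 0" "\<beta> \<ge> 0"
  shows "apply_bcontfun (picard_bcontfun l R \<beta> y) = weighted_picard l R \<beta> (apply_bcontfun y)"
  unfolding picard_bcontfun_def using assms
  by (intro Bcontfun_inverse weighted_picard_in_bcontfun) auto

lemma abs_weighted_picard_diff_le:
  assumes l: "l \<in> {0..L}" and m: "m \<in> {0..L}" and R: "R > 0" and \<beta>: "\<beta> > 0"
    and y: "continuous_on UNIV y" and z: "continuous_on UNIV z"
    and d: "\<And>s. \<bar>y s - z s\<bar> \<le> d"
  shows "\<bar>weighted_picard l R \<beta> y t - weighted_picard m R \<beta> z t\<bar>
    \<le> R * rate_lip L R * d / \<beta> + R^4 * lip_const (L * R) * \<bar>l - m\<bar>"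
proof -
  define r where "r = clamp 0 R t"
  define K where "K = rate_lip L R"
  define c where "c = R * R * R * lip_const (L * R) * \<bar>l - m\<bar>"
  have r: "r \<in> {0..R}" using clamp_real_in_Icc R r_def by auto
  have "d \<ge> 0" using d[of 0] by (meson abs_ge_zero order_trans)
  have "K \<ge> 0" "c \<ge> 0" using rate_lip_nonneg lip_const_nonneg l R by (auto simp: K_def c_def)
  have "\<bar>unweight \<beta> R y s - unweight \<beta> R z s\<bar> \<le> exp (\<beta> * s) * d" if "s \<in> {0..R}" for s
    using that d[of s] by (simp add: unweight_def clamp_real_id abs_mult flip: right_diff_distrib)
  then have "\<bar>picard l R (unweight \<beta> R y) r - picard m R (unweight \<beta> R z) r\<bar>
      \<le> r * (K * d * exp (\<beta> * r) / \<beta> + c)"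
    unfolding K_def c_def using continuous_on_unweight[OF y] continuous_on_unweight[OF z]
    by (intro abs_picard_diff_le[OF l m R \<beta> _ _ _ r])
  then have "exp (- \<beta> * r) * \<bar>picard l R (unweight \<beta> R y) r - picard m R (unweight \<beta> R z) r\<bar>
      \<le> exp (- \<beta> * r) * (r * (K * d * exp (\<beta> * r) / \<beta> + c))"
    by (rule mult_left_mono) simp
  also have "\<dots> = r * K * d / \<beta> + exp (- \<beta> * r) * r * c"
  proof -
    have "exp (- (\<beta> * r)) * exp (\<beta> * r) = 1" by (simp flip: exp_add)
    then show ?thesis by (simp add: distrib_left mult.assoc mult.left_commute[of "exp (- \<beta> * r)"])
  qed
  also have "\<dots> \<le> R * K * d / \<beta> + 1 * R * c"
    using r \<beta> \<open>K \<ge> 0\<close> \<open>d \<ge> 0\<close> \<open>c \<ge> 0\<close>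
    by (intro add_mono divide_right_mono mult_right_mono mult_mono) auto
  also have "\<dots> = R * rate_lip L R * d / \<beta> + R^4 * lip_const (L * R) * \<bar>l - m\<bar>"
    unfolding K_def c_def by (simp add: power4_eq_xxxx)
  finally show ?thesis
    unfolding weighted_picard_def r_def[symmetric] by (simp add: abs_mult flip: right_diff_distrib)
qed

lemma dist_picard_bcontfun_le:
  assumes l: "l \<in> {0..L}" and m: "m \<in> {0..L}" and R: "R > 0" and \<beta>: "\<beta> > 0"
  shows "dist (picard_bcontfun l R \<beta> y) (picard_bcontfun m R \<beta> z)
    \<le> R * rate_lip L R * dist y z / \<beta> + R^4 * lip_const (L * R) * \<bar>l - m\<bar>"
proof (rule dist_bound)
  fix t
  show "dist (apply_bcontfun (picard_bcontfun l R \<beta> y) t)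
      (apply_bcontfun (picard_bcontfun m R \<beta> z) t)
    \<le> R * rate_lip L R * dist y z / \<beta> + R^4 * lip_const (L * R) * \<bar>l - m\<bar>"
    using l m R \<beta> dist_bounded[of y _ z]
    by (auto simp: apply_picard_bcontfun dist_real_def intro!: abs_weighted_picard_diff_le)
qed

lemma bielecki_rate_pos: "L \<ge> 0 \<Longrightarrow> R > 0 \<Longrightarrow> bielecki_rate L R > 0"
  unfolding bielecki_rate_def using rate_lip_nonneg[of L R] by (simp add: add_nonneg_pos)

lemma rate_lip_div_bielecki_le:
  assumes "L \<ge> 0" "R > 0" "D \<ge> 0"
  shows "R * rate_lip L R * D / bielecki_rate L R \<le> D / 2"
  using assms rate_lip_nonneg[of L R] bielecki_rate_pos[of L R]
  by (simp add: pos_divide_le_eq bielecki_rate_def algebra_simps)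

lemma picard_cong:
  assumes "\<And>t. t \<in> {0..R} \<Longrightarrow> x t = y t" "r \<in> {0..R}"
  shows "picard l R x r = picard l R y r"
  unfolding picard_def damping_def using assms by (auto intro!: integral_cong)

lemma picard_fixed_bounds:
  assumes "l \<ge> 0" "R > 0" "picard_fixed l R x" "r \<in> {0..R}"
  shows "0 \<le> x r" "x r \<le> r"
  using picard_bounds[of l R x r] assms unfolding picard_fixed_def by auto

lemma picard_fixed_of_fixpoint:
  assumes l: "l \<ge> 0" and R: "R > 0" and \<beta>: "\<beta> \<ge> 0" and y: "picard_bcontfun l R \<beta> y = y"
  shows "picard_fixed l R (unweight \<beta> R (apply_bcontfun y))"
  unfolding picard_fixed_def
proof
  let ?x = "unweight \<beta> R (apply_bcontfun y)"
  show "continuous_on {0..R} ?x" by (rule continuous_on_unweight) simp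
  show "\<forall>r\<in>{0..R}. ?x r = picard l R ?x r"
  proof
    fix r assume r: "r \<in> {0..R}"
    have "apply_bcontfun y r = weighted_picard l R \<beta> (apply_bcontfun y) r"
      using apply_picard_bcontfun[OF l R \<beta>, of y] y by simp
    then show "?x r = picard l R ?x r"
      unfolding unweight_def weighted_picard_def using r
      by (simp add: clamp_real_id mult.assoc[symmetric] flip: exp_add)
  qed
qed

lemma fixpoint_of_picard_fixed:
  assumes l: "l \<ge> 0" and R: "R > 0" and \<beta>: "\<beta> \<ge> 0" and x: "picard_fixed l R x"
  obtains y where "picard_bcontfun l R \<beta> y = y"
    and "\<And>r. r \<in> {0..R} \<Longrightarrow> x r = exp (\<beta> * r) * apply_bcontfun y r"
proof -
  define g where "g = (\<lambda>t. exp (- \<beta> * clamp 0 R t) * x (clamp 0 R t))"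
  have "continuous_on {0..R} x" using x unfolding picard_fixed_def by simp
  have "g \<in> bcontfun"
  proof (rule bcontfun_normI)
    show "continuous_on UNIV g" unfolding g_def
      by (intro continuous_intros continuous_on_compose2[OF \<open>continuous_on {0..R} x\<close>])
        (use clamp_real_in_Icc R in auto)
    fix t
    have "clamp 0 R t \<in> {0..R}" using clamp_real_in_Icc R by auto
    then show "norm (g t) \<le> R"
      unfolding g_def real_norm_def using picard_fixed_bounds[OF l R x] \<beta>
      by (intro abs_exp_minus_mult_le) force+
  qed
  then have g: "apply_bcontfun (Bcontfun g) = g" by (simp add: Bcontfun_inverse)
  have unweight_g: "unweight \<beta> R g t = x t" if "t \<in> {0..R}" for t
    using that by (simp add: unweight_def g_def clamp_real_id mult.assoc[symmetric] flip: exp_add)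
  have "picard_bcontfun l R \<beta> (Bcontfun g) = Bcontfun g"
  proof (rule bcontfun_eqI)
    fix t
    have c: "clamp 0 R t \<in> {0..R}" using clamp_real_in_Icc R by auto
    have "picard l R (unweight \<beta> R g) (clamp 0 R t) = picard l R x (clamp 0 R t)"
      using unweight_g c by (intro picard_cong) auto
    also have "\<dots> = x (clamp 0 R t)" using x c unfolding picard_fixed_def by simp
    finally show "apply_bcontfun (picard_bcontfun l R \<beta> (Bcontfun g)) t
        = apply_bcontfun (Bcontfun g) t"
      unfolding apply_picard_bcontfun[OF l R \<beta>] g by (simp add: weighted_picard_def g_def)
  qed
  moreover have "x r = exp (\<beta> * r) * apply_bcontfun (Bcontfun g) r" if "r \<in> {0..R}" for r
    using unweight_g[OF that] that g by (simp add: unweight_def clamp_real_id)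
  ultimately show ?thesis by (rule that)
qed

lemma picard_fixed_exists:
  assumes l: "l \<ge> 0" and R: "R > 0"
  shows "\<exists>x. picard_fixed l R x"
proof -
  have \<beta>: "bielecki_rate l R > 0" using bielecki_rate_pos l R by simp
  have "dist (picard_bcontfun l R (bielecki_rate l R) y) (picard_bcontfun l R (bielecki_rate l R) z)
    \<le> 1/2 * dist y z" for y z
  proof -
    have "dist (picard_bcontfun l R (bielecki_rate l R) y) (picard_bcontfun l R (bielecki_rate l R) z)
      \<le> R * rate_lip l R * dist y z / bielecki_rate l R"
      using dist_picard_bcontfun_le[of l l l R "bielecki_rate l R" y z] l R \<beta> by simp
    also have "\<dots> \<le> dist y z / 2" using l R by (intro rate_lip_div_bielecki_le) auto
    finally show ?thesis by simp
  qed
  then obtain y where "picard_bcontfun l R (bielecki_rate l R) y = y"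
    using banach_fix_type[of "1/2" "picard_bcontfun l R (bielecki_rate l R)"] by auto
  then have "picard_fixed l R (unweight (bielecki_rate l R) R (apply_bcontfun y))"
    by (rule picard_fixed_of_fixpoint[OF l R less_imp_le[OF \<beta>]])
  then show ?thesis by blast
qed

lemma abs_picard_fixed_diff_le:
  assumes l: "l \<in> {0..L}" and m: "m \<in> {0..L}" and R: "R > 0"
    and x: "picard_fixed l R x" and z: "picard_fixed m R z" and r: "r \<in> {0..R}"
  shows "\<bar>x r - z r\<bar> \<le> exp (bielecki_rate L R * R) * (2 * R^4 * lip_const (L * R)) * \<bar>l - m\<bar>"
proof -
  define \<beta> where "\<beta> = bielecki_rate L R"
  have \<beta>: "\<beta> > 0" using bielecki_rate_pos l R \<beta>_def by simp
  obtain y1 where y1: "picard_bcontfun l R \<beta> y1 = y1"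
    and x_eq: "\<And>r. r \<in> {0..R} \<Longrightarrow> x r = exp (\<beta> * r) * apply_bcontfun y1 r"
    using fixpoint_of_picard_fixed[OF _ R _ x, of \<beta>] l \<beta> by auto
  obtain y2 where y2: "picard_bcontfun m R \<beta> y2 = y2"
    and z_eq: "\<And>r. r \<in> {0..R} \<Longrightarrow> z r = exp (\<beta> * r) * apply_bcontfun y2 r"
    using fixpoint_of_picard_fixed[OF _ R _ z, of \<beta>] m \<beta> by auto
  have "dist y1 y2 \<le> R * rate_lip L R * dist y1 y2 / \<beta> + R^4 * lip_const (L * R) * \<bar>l - m\<bar>"
    using dist_picard_bcontfun_le[OF l m R \<beta>, of y1 y2] y1 y2 by simp
  also have "\<dots> \<le> dist y1 y2 / 2 + R^4 * lip_const (L * R) * \<bar>l - m\<bar>"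
    using rate_lip_div_bielecki_le[of L R "dist y1 y2"] l R \<beta>_def by simp
  finally have dy: "dist y1 y2 \<le> 2 * R^4 * lip_const (L * R) * \<bar>l - m\<bar>" by simp
  have "\<bar>x r - z r\<bar> = exp (\<beta> * r) * dist (apply_bcontfun y1 r) (apply_bcontfun y2 r)"
    using x_eq[OF r] z_eq[OF r] by (simp add: dist_real_def abs_mult flip: right_diff_distrib)
  also have "\<dots> \<le> exp (\<beta> * R) * (2 * R^4 * lip_const (L * R) * \<bar>l - m\<bar>)"
    using r \<beta> dy dist_bounded[of y1 r y2] by (intro mult_mono) auto
  finally show ?thesis unfolding \<beta>_def by (simp add: mult.assoc)
qed

lemma picard_fixed_unique:
  assumes "l \<ge> 0" "R > 0" "picard_fixed l R x" "picard_fixed l R z" "r \<in> {0..R}"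
  shows "x r = z r"
  using abs_picard_fixed_diff_le[of l l l R x z r] assms by simp

lemma picard_fixed_restrict:
  assumes l: "l \<ge> 0" and R1: "R1 > 0" and R12: "R1 \<le> R2" and x: "picard_fixed l R2 x"
  shows "picard_fixed l R1 x"
  unfolding picard_fixed_def
proof
  show "continuous_on {0..R1} x"
    using x R12 unfolding picard_fixed_def by (auto intro: continuous_on_subset)
  have "trunc_rate l R1 (x t) = trunc_rate l R2 (x t)" if "t \<in> {0..R1}" for t
    using picard_fixed_bounds[OF l _ x, of t] that R1 R12 by (simp add: trunc_rate_eq)
  then have "picard l R1 x r = picard l R2 x r" if "r \<in> {0..R1}" for r
    using that unfolding picard_def damping_def by (auto intro!: integral_cong)
  then show "\<forall>r\<in>{0..R1}. x r = picard l R1 x r"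
    using x R12 unfolding picard_fixed_def by auto
qed

subsection \<open>The profile for a given shooting parameter\<close>

text \<open>Gluing the solutions on \<open>[0, R]\<close>, \<open>profile_mean l\<close> solves \<open>x = picard l R x\<close> on the whole
  half-line.\<close>

definition local_sol :: "real \<Rightarrow> real \<Rightarrow> real \<Rightarrow> real" where
  "local_sol l R = (SOME x. picard_fixed l R x)"

definition profile_mean :: "real \<Rightarrow> real \<Rightarrow> real" where
  "profile_mean l t = local_sol l (t + 1) t"

definition profile :: "real \<Rightarrow> real \<Rightarrow> real" where
  "profile l t = t * profile_mean l t"

definition profile_rate :: "real \<Rightarrow> real \<Rightarrow> real" where
  "profile_rate l t = profile_mean l t * phi (l * profile_mean l t)"

definition profile_damping :: "real \<Rightarrow> real \<Rightarrow> real" where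
  "profile_damping l s = exp (- integral {0..s} (profile_rate l))"

lemma local_sol_picard_fixed: "l \<ge> 0 \<Longrightarrow> R > 0 \<Longrightarrow> picard_fixed l R (local_sol l R)"
  unfolding local_sol_def using picard_fixed_exists by (metis someI_ex)

lemma local_sol_eq_profile_mean:
  assumes l: "l \<ge> 0" and R: "R > 0" and t: "t \<in> {0..R}"
  shows "local_sol l R t = profile_mean l t"
proof -
  define R0 where "R0 = min R (t + 1)"
  have R0: "R0 > 0" "R0 \<le> R" "R0 \<le> t + 1" "t \<in> {0..R0}" using R t by (auto simp: R0_def)
  have "picard_fixed l R0 (local_sol l R)"
    by (rule picard_fixed_restrict[OF l R0(1,2) local_sol_picard_fixed[OF l R]])
  moreover have "picard_fixed l R0 (local_sol l (t + 1))"
    using t by (intro picard_fixed_restrict[OF l R0(1,3) local_sol_picard_fixed[OF l]]) auto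
  ultimately show ?thesis
    unfolding profile_mean_def using picard_fixed_unique[OF l R0(1) _ _ R0(4)] by blast
qed

lemma profile_mean_bounds:
  assumes "l \<ge> 0" "t \<ge> 0"
  shows "0 \<le> profile_mean l t" "profile_mean l t \<le> t"
  using picard_fixed_bounds[OF assms(1) _ local_sol_picard_fixed[OF assms(1)], of "t + 1" t] assms
  unfolding profile_mean_def by auto

lemma continuous_on_profile_mean:
  assumes l: "l \<ge> 0"
  shows "continuous_on {0..} (profile_mean l)"
proof (rule continuous_on_atLeast_0I)
  fix R :: real assume R: "R > 0"
  have "continuous_on {0..R} (local_sol l R)"
    using local_sol_picard_fixed[OF l R] unfolding picard_fixed_def by simp
  then show "continuous_on {0..R} (profile_mean l)"
    by (rule continuous_on_cong[THEN iffD1, rotated 2])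
      (use local_sol_eq_profile_mean[OF l R] in auto)
qed

lemma continuous_on_profile_rate:
  assumes l: "l \<ge> 0"
  shows "continuous_on {0..} (profile_rate l)"
proof -
  have "continuous_on {0..} (\<lambda>t. phi (l * profile_mean l t))"
    using continuous_on_profile_mean[OF l] profile_mean_bounds[OF l] l
    by (intro continuous_on_compose2[OF continuous_on_phi] continuous_intros) auto
  then show ?thesis
    unfolding profile_rate_def using continuous_on_profile_mean[OF l] by (intro continuous_intros)
qed

lemma profile_rate_nonneg: "l \<ge> 0 \<Longrightarrow> t \<ge> 0 \<Longrightarrow> profile_rate l t \<ge> 0"
  unfolding profile_rate_def using profile_mean_bounds[of l t] phi_nonneg[of "l * profile_mean l t"]
  by simp

lemma profile_rate_eq: "r > 0 \<Longrightarrow> profile_rate l r = (profile l r / r) * phi (l * (profile l r / r))"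
  by (simp add: profile_rate_def profile_def)

lemma damping_local_sol:
  assumes l: "l \<ge> 0" and R: "R > 0" and s: "s \<in> {0..R}"
  shows "damping l R (local_sol l R) s = profile_damping l s"
proof -
  have "trunc_rate l R (local_sol l R t) = profile_rate l t" if t: "t \<in> {0..R}" for t
    using picard_fixed_bounds[OF l R local_sol_picard_fixed[OF l R] t] t
    by (simp add: trunc_rate_eq local_sol_eq_profile_mean[OF l R t] profile_rate_def)
  then show ?thesis
    unfolding damping_def profile_damping_def using s by (auto intro!: integral_cong)
qed

lemma profile_damping_bounds:
  assumes l: "l \<ge> 0" and s: "s \<ge> 0"
  shows "0 < profile_damping l s" "profile_damping l s \<le> 1"
  using damping_bounds[OF l _ _, of "s + 1" "local_sol l (s + 1)" s]
    damping_local_sol[OF l, of "s + 1" s] local_sol_picard_fixed[OF l, of "s + 1"] s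
  unfolding picard_fixed_def by auto

lemma profile_damping_0: "profile_damping l 0 = 1"
  by (simp add: profile_damping_def)

lemma continuous_on_profile_damping:
  assumes l: "l \<ge> 0"
  shows "continuous_on {0..} (profile_damping l)"
proof (rule continuous_on_atLeast_0I)
  fix R :: real assume "R > 0"
  have "continuous_on {0..R} (\<lambda>s. integral {0..s} (profile_rate l))"
    using continuous_on_profile_rate[OF l]
    by (intro indefinite_integral_continuous_1 integrable_continuous_interval)
      (auto intro: continuous_on_subset)
  then show "continuous_on {0..R} (profile_damping l)"
    unfolding profile_damping_def by (intro continuous_intros)
qed

lemma profile_eq_integral:
  assumes l: "l \<ge> 0" and r: "r \<ge> 0"
  shows "profile l r = integral {0..r} (\<lambda>s. 2 * s * profile_damping l s)"
proof (cases "r = 0")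
  case True then show ?thesis by (simp add: profile_def)
next
  case False
  define R where "R = r + 1"
  have R: "R > 0" "r \<in> {0..R}" using r by (auto simp: R_def)
  have "profile_mean l r = picard l R (local_sol l R) r"
    using local_sol_picard_fixed[OF l R(1)] R local_sol_eq_profile_mean[OF l R]
    unfolding picard_fixed_def by auto
  also have "\<dots> = integral {0..r} (\<lambda>s. 2 * s * profile_damping l s) / r"
    using False r R damping_local_sol[OF l R(1)] by (auto simp: picard_def intro!: integral_cong)
  finally show ?thesis using False by (simp add: profile_def)
qed

lemma continuous_on_profile: "l \<ge> 0 \<Longrightarrow> continuous_on {0..} (profile l)"
  unfolding profile_def using continuous_on_profile_mean by (intro continuous_intros)

lemma profile_bounds:
  assumes "l \<ge> 0" "t \<ge> 0"
  shows "0 \<le> profile l t" "profile l t \<le> t\<^sup>2"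
  using profile_mean_bounds[OF assms] assms unfolding profile_def
  by (auto simp: power2_eq_square intro: mult_left_mono)

lemma profile_0: "profile l 0 = 0"
  by (simp add: profile_def)

lemma profile_has_derivative_within:
  assumes l: "l \<ge> 0" and r: "r \<ge> 0"
  shows "(profile l has_real_derivative 2 * r * profile_damping l r) (at r within {0..r+1})"
proof -
  have c: "continuous_on {0..r+1} (\<lambda>s. 2 * s * profile_damping l s)"
    using continuous_on_profile_damping[OF l]
    by (intro continuous_intros) (auto intro: continuous_on_subset)
  have "((\<lambda>x. integral {0..x} (\<lambda>s. 2 * s * profile_damping l s)) has_real_derivative
      2 * r * profile_damping l r) (at r within {0..r+1})"
    using integral_has_real_derivative[OF c] r by simp
  then show ?thesis
    by (rule has_field_derivative_transform_within[of _ _ _ _ 1])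
      (use profile_eq_integral[OF l] r in auto)
qed

lemma profile_has_derivative_atLeast:
  "l \<ge> 0 \<Longrightarrow> r \<ge> 0 \<Longrightarrow> (profile l has_real_derivative 2 * r * profile_damping l r) (at r within {0..})"
  using profile_has_derivative_within[of l r] at_within_atLeast_eq[of 0 r "r+1"] by simp

lemma profile_has_derivative:
  "l \<ge> 0 \<Longrightarrow> r > 0 \<Longrightarrow> (profile l has_real_derivative 2 * r * profile_damping l r) (at r)"
  using profile_has_derivative_within[of l r] at_within_Icc_at[of 0 r "r+1"] by simp

lemma profile_damping_has_derivative:
  assumes l: "l \<ge> 0" and r: "r > 0"
  shows "(profile_damping l has_real_derivative - profile_rate l r * profile_damping l r) (at r)"
proof -
  have c: "continuous_on {0..r+1} (profile_rate l)"
    using continuous_on_profile_rate[OF l] by (auto intro: continuous_on_subset)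
  have "((\<lambda>x. integral {0..x} (profile_rate l)) has_real_derivative profile_rate l r) (at r)"
    using integral_has_real_derivative[OF c, of r] r at_within_Icc_at[of 0 r "r+1"] by simp
  from DERIV_chain2[OF DERIV_exp DERIV_minus[OF this]]
  show ?thesis unfolding profile_damping_def by (simp add: mult.commute)
qed

subsection \<open>Monotonicity and growth of the profile\<close>

lemma continuous_on_profile_Icc: "l \<ge> 0 \<Longrightarrow> a \<ge> 0 \<Longrightarrow> continuous_on {a..b} (profile l)"
  using continuous_on_profile by (rule continuous_on_subset) auto

lemma continuous_on_profile_damping_Icc:
  "l \<ge> 0 \<Longrightarrow> a \<ge> 0 \<Longrightarrow> continuous_on {a..b} (profile_damping l)"
  using continuous_on_profile_damping by (rule continuous_on_subset) auto

lemma profile_mono: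
  assumes l: "l \<ge> 0" and "0 \<le> a" "a \<le> b"
  shows "profile l a \<le> profile l b"
proof (rule DERIV_nonneg_imp_le[OF assms(3) continuous_on_profile_Icc[OF l assms(2)]])
  fix x assume "a < x" "x < b"
  then show "(profile l has_real_derivative 2 * x * profile_damping l x) (at x)"
    and "0 \<le> 2 * x * profile_damping l x"
    using assms profile_has_derivative[OF l] profile_damping_bounds[OF l, of x] by auto
qed

lemma profile_damping_antimono:
  assumes l: "l \<ge> 0" and "0 \<le> a" "a \<le> b"
  shows "profile_damping l b \<le> profile_damping l a"
proof (rule DERIV_nonpos_imp_decreasing_open[OF assms(3)])
  show "continuous_on {a..b} (profile_damping l)"
    using continuous_on_profile_damping_Icc[OF l assms(2)] .
  fix x assume "a < x" "x < b"
  then show "\<exists>y. (profile_damping l has_real_derivative y) (at x) \<and> y \<le> 0"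
    using assms profile_damping_has_derivative[OF l, of x] profile_damping_bounds[OF l, of x]
      profile_rate_nonneg[OF l, of x]
    by (intro exI[of _ "- profile_rate l x * profile_damping l x"]) auto
qed

lemma profile_diff_ge:
  assumes l: "l \<ge> 0" and a: "0 \<le> a" and ab: "a \<le> b"
  shows "profile_damping l b * (b\<^sup>2 - a\<^sup>2) \<le> profile l b - profile l a"
proof -
  define E where "E = profile_damping l b"
  have "profile l a - E * a\<^sup>2 \<le> profile l b - E * b\<^sup>2"
  proof (rule DERIV_nonneg_imp_le[OF ab, of _ "\<lambda>x. 2 * x * profile_damping l x - E * (2 * x)"])
    show "continuous_on {a..b} (\<lambda>x. profile l x - E * x\<^sup>2)"
      using continuous_on_profile_Icc[OF l a] by (intro continuous_intros)
    fix x assume x: "a < x" "x < b"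
    show "((\<lambda>x. profile l x - E * x\<^sup>2) has_real_derivative
        2 * x * profile_damping l x - E * (2 * x)) (at x)"
      using x a by (auto intro!: derivative_eq_intros profile_has_derivative[OF l])
    have "E \<le> profile_damping l x" unfolding E_def using profile_damping_antimono[OF l] x a by simp
    then show "0 \<le> 2 * x * profile_damping l x - E * (2 * x)"
      using x a by (simp add: algebra_simps mult_left_mono)
  qed
  then show ?thesis unfolding E_def by (simp add: algebra_simps)
qed

lemma profile_damping_ge:
  assumes l: "l > 0" and s: "s \<ge> 0"
  shows "exp (- A * s / l) \<le> profile_damping l s"
proof -
  \<comment> \<open>\<open>l * profile_rate l t = y * phi y\<close> for \<open>y = l * profile_mean l t\<close>, hence it is at most \<open>A\<close>\<close>
  have rate: "profile_rate l t \<le> A / l" if "t \<ge> 0" for t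
    using r_phi_le[of "l * profile_mean l t"] profile_mean_bounds[of l t] l that
    by (simp add: profile_rate_def pos_le_divide_eq mult_ac)
  have "profile_damping l 0 * exp (A * 0 / l) \<le> profile_damping l s * exp (A * s / l)"
  proof (rule DERIV_nonneg_imp_le[OF s])
    show "continuous_on {0..s} (\<lambda>x. profile_damping l x * exp (A * x / l))"
      using continuous_on_profile_damping_Icc[of l 0 s] l by (intro continuous_intros) auto
    fix x assume x: "0 < x" "x < s"
    show "((\<lambda>x. profile_damping l x * exp (A * x / l)) has_real_derivative
        profile_damping l x * exp (A * x / l) * (A / l - profile_rate l x)) (at x)"
      using x l
      by (auto intro!: derivative_eq_intros profile_damping_has_derivative simp: algebra_simps)
    show "0 \<le> profile_damping l x * exp (A * x / l) * (A / l - profile_rate l x)"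
      using rate[of x] profile_damping_bounds[of l x] x l by simp
  qed
  then show ?thesis by (simp add: profile_damping_0 exp_minus field_simps)
qed

lemma profile_ge:
  assumes l: "l > 0" and r: "r \<ge> 0"
  shows "r\<^sup>2 * exp (- A * r / l) \<le> profile l r"
proof -
  define c where "c = exp (- A * r / l)"
  have "A \<ge> 0" using r_phi_le[of 0] by simp
  have "profile l 0 - c * 0\<^sup>2 \<le> profile l r - c * r\<^sup>2"
  proof (rule DERIV_nonneg_imp_le[OF r, of _ "\<lambda>x. 2 * x * profile_damping l x - c * (2 * x)"])
    show "continuous_on {0..r} (\<lambda>x. profile l x - c * x\<^sup>2)"
      using continuous_on_profile_Icc[of l 0 r] l by (intro continuous_intros) auto
    fix x assume x: "0 < x" "x < r"
    show "((\<lambda>x. profile l x - c * x\<^sup>2) has_real_derivative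
        2 * x * profile_damping l x - c * (2 * x)) (at x)"
      using x l by (auto intro!: derivative_eq_intros profile_has_derivative)
    have "c \<le> exp (- A * x / l)"
      unfolding c_def using x l \<open>A \<ge> 0\<close> by (simp add: divide_right_mono mult_left_mono)
    also have "\<dots> \<le> profile_damping l x" using profile_damping_ge[OF l, of x] x by simp
    finally show "0 \<le> 2 * x * profile_damping l x - c * (2 * x)"
      using x by (simp add: algebra_simps mult_left_mono)
  qed
  then show ?thesis by (simp add: profile_0 c_def mult.commute)
qed

lemma profile_0_param_invariant:
  assumes r: "r \<ge> 0"
  shows "2 * r\<^sup>2 * profile_damping 0 r - 2 * profile 0 r + phi 0 * (profile 0 r)\<^sup>2 / 2 = 0"
proof (cases "r = 0")
  case True then show ?thesis by (simp add: profile_0)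
next
  case False
  define Q where
    "Q x = 2 * x\<^sup>2 * profile_damping 0 x - 2 * profile 0 x + phi 0 * (profile 0 x)\<^sup>2 / 2" for x
  have "Q r = Q 0"
  proof (rule DERIV_isconst_end[of 0 r Q])
    show "continuous_on {0..r} Q" unfolding Q_def
      using continuous_on_profile_Icc[of 0 0 r] continuous_on_profile_damping_Icc[of 0 0 r]
      by (intro continuous_intros) auto
    fix x :: real assume x: "0 < x" "x < r"
    \<comment> \<open>for \<open>l = 0\<close> the rate is \<open>phi 0 * profile 0 x / x\<close>, which makes the derivative vanish\<close>
    have "x * profile_rate 0 x = phi 0 * profile 0 x"
      using profile_rate_eq[of x 0] x by simp
    then show "(Q has_real_derivative 0) (at x)" unfolding Q_def
      using x
      by (auto intro!: derivative_eq_intros profile_has_derivative profile_damping_has_derivative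
          simp: power2_eq_square algebra_simps)
  qed (use False r in auto)
  then show ?thesis by (simp add: Q_def profile_0)
qed

lemma profile_0_param_le:
  assumes r: "r \<ge> 0"
  shows "profile 0 r \<le> 4 / phi 0"
proof -
  have "0 \<le> 2 * r\<^sup>2 * profile_damping 0 r" using profile_damping_bounds[of 0 r] r by simp
  then have "phi 0 * (profile 0 r)\<^sup>2 / 2 \<le> 2 * profile 0 r"
    using profile_0_param_invariant[OF r] by linarith
  then have "(phi 0 * profile 0 r) * profile 0 r \<le> 4 * profile 0 r"
    by (simp add: power2_eq_square)
  moreover have "profile 0 r \<ge> 0" using profile_bounds[of 0 r] r by simp
  ultimately have "phi 0 * profile 0 r \<le> 4"
    by (cases "profile 0 r = 0") (simp_all add: mult_le_cancel_right_pos)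
  then show ?thesis using phi0_pos by (simp add: pos_le_divide_eq mult.commute)
qed

lemma profile_damping_sq_ge:
  assumes l: "l \<ge> 0" and x: "x \<ge> 1"
    and rate: "\<And>t. t \<ge> 1 \<Longrightarrow> t * profile_rate l t \<le> 2"
  shows "profile_damping l 1 \<le> profile_damping l x * x\<^sup>2"
proof -
  have "profile_damping l 1 * 1\<^sup>2 \<le> profile_damping l x * x\<^sup>2"
  proof (rule DERIV_nonneg_imp_le[OF x])
    show "continuous_on {1..x} (\<lambda>x. profile_damping l x * x\<^sup>2)"
      using continuous_on_profile_damping_Icc[OF l, of 1 x] by (intro continuous_intros) auto
    fix y assume y: "1 < y" "y < x"
    show "((\<lambda>x. profile_damping l x * x\<^sup>2) has_real_derivative
        y * profile_damping l y * (2 - y * profile_rate l y)) (at y)"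
      using y by (auto intro!: derivative_eq_intros profile_damping_has_derivative[OF l]
          simp: power2_eq_square algebra_simps)
    show "0 \<le> y * profile_damping l y * (2 - y * profile_rate l y)"
      using rate[of y] y profile_damping_bounds[OF l, of y] by simp
  qed
  then show ?thesis by simp
qed

lemma profile_log_growth:
  assumes l: "l \<ge> 0" and x: "x \<ge> 1"
    and rate: "\<And>t. t \<ge> 1 \<Longrightarrow> t * profile_rate l t \<le> 2"
  shows "profile l 1 + 2 * profile_damping l 1 * ln x \<le> profile l x"
proof -
  define e where "e = profile_damping l 1"
  have "profile l 1 - 2 * e * ln 1 \<le> profile l x - 2 * e * ln x"
  proof (rule DERIV_nonneg_imp_le[OF x, of _ "\<lambda>x. 2 * x * profile_damping l x - 2 * e * (1 / x)"])
    show "continuous_on {1..x} (\<lambda>x. profile l x - 2 * e * ln x)"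
      using continuous_on_profile_Icc[OF l, of 1 x] by (intro continuous_intros) auto
    fix y assume y: "1 < y" "y < x"
    show "((\<lambda>x. profile l x - 2 * e * ln x) has_real_derivative
        2 * y * profile_damping l y - 2 * e * (1 / y)) (at y)"
      using y by (auto intro!: derivative_eq_intros profile_has_derivative[OF l])
    have "e \<le> profile_damping l y * y\<^sup>2"
      unfolding e_def using profile_damping_sq_ge[OF l _ rate, of y] y by simp
    then have "e / y \<le> y * profile_damping l y"
      using y by (simp add: divide_le_eq power2_eq_square algebra_simps)
    then show "0 \<le> 2 * y * profile_damping l y - 2 * e * (1 / y)" by simp
  qed
  then show ?thesis unfolding e_def by simp
qed

lemma bounded_profile_imp_gt_2:
  assumes l: "l \<ge> 0" and bound: "\<And>r. r \<ge> 0 \<Longrightarrow> profile l r \<le> L"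
  shows "L * phi 0 > 2"
proof (rule ccontr)
  assume "\<not> L * phi 0 > 2"
  have rate: "t * profile_rate l t \<le> 2" if t: "t \<ge> 1" for t
  proof -
    have "t * profile_rate l t = profile l t * phi (l * (profile l t / t))"
      using profile_rate_eq[of t l] t by simp
    also have "\<dots> \<le> L * phi 0"
      using bound[of t] t profile_bounds[OF l, of t] l
        phi_le_phi0[of "l * (profile l t / t)"] phi_nonneg[of "l * (profile l t / t)"]
      by (intro mult_mono) auto
    finally show ?thesis using \<open>\<not> L * phi 0 > 2\<close> by simp
  qed
  define e where "e = profile_damping l 1"
  define x where "x = exp ((L + 1) / (2 * e))"
  have e: "e > 0" using profile_damping_bounds[OF l, of 1] e_def by simp
  have "L \<ge> 0" using bound[of 0] profile_0 by simp
  then have x: "x \<ge> 1" unfolding x_def using e by simp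
  have "2 * e * ln x = L + 1" unfolding x_def using e by simp
  then have "profile l x \<ge> L + 1"
    using profile_log_growth[OF l x rate] profile_bounds[OF l, of 1] unfolding e_def by simp
  then show False using bound[of x] x by simp
qed

subsection \<open>Trapped profiles\<close>

text \<open>Beyond \<open>r0\<close>, as long as \<open>l * profile l t < x0 * t\<close>, the first condition gives
  \<open>t * profile_rate l t \<ge> k > 2\<close>, which makes \<open>trap_energy l k\<close> nonincreasing; the second
  condition bounds \<open>trap_energy l k r0\<close> by \<open>b\<close> (via \<open>profile_diff_ge\<close> on \<open>[r0/2, r0]\<close>), and
  the third one then keeps \<open>l * profile l t\<close> below \<open>x0 * t\<close> forever. All conditions are
  strict inequalities, hence open in the parameter \<open>l\<close>.\<close>

definition trap_data :: "real \<Rightarrow> real \<Rightarrow> real \<Rightarrow> real \<Rightarrow> real \<Rightarrow> bool" where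
  "trap_data b l r0 k x0 \<longleftrightarrow> r0 > 0 \<and> k > 2 \<and> x0 > 0
     \<and> (\<forall>y\<in>{0..x0}. k \<le> profile l r0 * phi y)
     \<and> profile l r0 + 8 * (profile l r0 - profile l (r0/2)) / (3 * (k - 2)) < b
     \<and> l * b < x0 * r0"

definition trapped :: "real \<Rightarrow> real \<Rightarrow> bool" where
  "trapped b l \<longleftrightarrow> (\<exists>r0 k x0. trap_data b l r0 k x0)"

definition trap_energy :: "real \<Rightarrow> real \<Rightarrow> real \<Rightarrow> real" where
  "trap_energy l k s = profile l s + 2 * profile_damping l s * s\<^sup>2 / (k - 2)"

lemma profile_le_trap_energy:
  "l \<ge> 0 \<Longrightarrow> k > 2 \<Longrightarrow> s \<ge> 0 \<Longrightarrow> profile l s \<le> trap_energy l k s"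
  using profile_damping_bounds[of l s] by (simp add: trap_energy_def)

lemma trap_energy_less:
  assumes l: "l \<ge> 0" and T: "trap_data b l r0 k x0"
  shows "trap_energy l k r0 < b"
proof -
  from T have r0: "r0 > 0" and k: "k > 2"
    and B: "profile l r0 + 8 * (profile l r0 - profile l (r0/2)) / (3 * (k - 2)) < b"
    unfolding trap_data_def by auto
  have "profile_damping l r0 * (r0\<^sup>2 - (r0/2)\<^sup>2) \<le> profile l r0 - profile l (r0/2)"
    using r0 by (intro profile_diff_ge[OF l]) auto
  then have "2 * profile_damping l r0 * r0\<^sup>2 \<le> 8 * (profile l r0 - profile l (r0/2)) / 3"
    by (simp add: power2_eq_square algebra_simps)
  then have "2 * profile_damping l r0 * r0\<^sup>2 / (k - 2)
      \<le> 8 * (profile l r0 - profile l (r0/2)) / 3 / (k - 2)"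
    using k by (intro divide_right_mono) auto
  then show ?thesis using B unfolding trap_energy_def by (simp add: field_simps)
qed

lemma trap_energy_has_derivative:
  assumes l: "l \<ge> 0" and k: "k > 2" and t: "t > 0"
  shows "(trap_energy l k has_real_derivative
    2 * t * profile_damping l t * (1 + (2 - t * profile_rate l t) / (k - 2))) (at t)"
proof -
  let ?E = "profile_damping l t" and ?G = "profile_rate l t"
  have "(trap_energy l k has_real_derivative
      2 * t * ?E + 2 * (- ?G * ?E * t\<^sup>2 + ?E * (2 * t)) / (k - 2)) (at t)"
    unfolding trap_energy_def using t k
    by (auto intro!: derivative_eq_intros profile_has_derivative[OF l]
        profile_damping_has_derivative[OF l] simp: power2_eq_square)
  moreover have "2 * t * ?E + 2 * (- ?G * ?E * t\<^sup>2 + ?E * (2 * t)) / (k - 2)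
    = 2 * t * ?E * (1 + (2 - t * ?G) / (k - 2))"
    using k by (simp add: field_simps power2_eq_square)
  ultimately show ?thesis by simp
qed

lemma trap_energy_antimono:
  assumes l: "l \<ge> 0" and T: "trap_data b l r0 k x0" and r1: "r0 \<le> r1"
    and below: "\<And>t. r0 < t \<Longrightarrow> t < r1 \<Longrightarrow> l * profile l t < x0 * t"
  shows "trap_energy l k r1 \<le> trap_energy l k r0"
proof (rule DERIV_nonpos_imp_decreasing_open[OF r1])
  from T have r0: "r0 > 0" and k: "k > 2"
    and ky: "\<And>y. y \<in> {0..x0} \<Longrightarrow> k \<le> profile l r0 * phi y"
    unfolding trap_data_def by auto
  show "continuous_on {r0..r1} (trap_energy l k)"
    unfolding trap_energy_def
    using continuous_on_profile_Icc[OF l] continuous_on_profile_damping_Icc[OF l] r0 k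
    by (intro continuous_intros) auto
  fix t assume t: "r0 < t" "t < r1"
  then have "t > 0" using r0 by simp
  define y where "y = l * (profile l t / t)"
  have y: "y \<in> {0..x0}"
    using below[OF t] \<open>t > 0\<close> profile_bounds[OF l, of t] l
    by (auto simp: y_def pos_divide_le_eq mult_ac)
  have "k \<le> profile l r0 * phi y" by (rule ky[OF y])
  also have "\<dots> \<le> profile l t * phi y"
    using profile_mono[OF l, of r0 t] r0 t phi_nonneg[of y] y by (intro mult_right_mono) auto
  also have "\<dots> = t * profile_rate l t"
    using profile_rate_eq[of t l] \<open>t > 0\<close> unfolding y_def by simp
  finally have "1 + (2 - t * profile_rate l t) / (k - 2) \<le> 0"
    using k by (simp add: field_simps)
  then have "2 * t * profile_damping l t * (1 + (2 - t * profile_rate l t) / (k - 2)) \<le> 0"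
    using profile_damping_bounds[OF l, of t] \<open>t > 0\<close> by (simp add: mult_nonneg_nonpos)
  then show "\<exists>D. (trap_energy l k has_real_derivative D) (at t) \<and> D \<le> 0"
    using trap_energy_has_derivative[OF l k \<open>t > 0\<close>] by blast
qed

lemma trap_profile_less:
  assumes l: "l \<ge> 0" and T: "trap_data b l r0 k x0" and r1: "r0 \<le> r1"
    and below: "\<And>t. r0 < t \<Longrightarrow> t < r1 \<Longrightarrow> l * profile l t < x0 * t"
  shows "profile l r1 < b"
proof -
  from T have "r0 > 0" "k > 2" unfolding trap_data_def by auto
  then have "profile l r1 \<le> trap_energy l k r1"
    using r1 by (intro profile_le_trap_energy[OF l]) auto
  also have "\<dots> \<le> trap_energy l k r0" by (rule trap_energy_antimono[OF l T r1 below])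
  also have "\<dots> < b" by (rule trap_energy_less[OF l T])
  finally show ?thesis .
qed

lemma trap_invariant:
  assumes l: "l \<ge> 0" and T: "trap_data b l r0 k x0" and r: "r0 \<le> r"
  shows "\<forall>t\<in>{r0..r}. l * profile l t < x0 * t"
proof (rule ccontr)
  from T have r0: "r0 > 0" and x0: "x0 > 0" and lb: "l * b < x0 * r0"
    unfolding trap_data_def by auto
  have l_profile: "l * profile l t < x0 * t" if "profile l t < b" "t \<ge> r0" for t
    using that lb l x0 mult_left_mono[of "profile l t" b l] mult_left_mono[of r0 t x0] by linarith
  \<comment> \<open>\<open>Inf S\<close> is the first point where the invariant fails\<close>
  define S where "S = {t \<in> {r0..r}. x0 * t \<le> l * profile l t}"
  assume "\<not> (\<forall>t\<in>{r0..r}. l * profile l t < x0 * t)"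
  then have "S \<noteq> {}" by (auto simp: S_def not_less)
  moreover have "bdd_below S" unfolding S_def by (rule bdd_belowI[of _ r0]) auto
  moreover have "closed S" unfolding S_def
    using continuous_on_profile_Icc[OF l, of r0 r] r0
    by (intro continuous_on_closed_Collect_le) (auto intro!: continuous_intros)
  ultimately have TS: "Inf S \<in> S" and Tle: "\<And>t. t \<in> S \<Longrightarrow> Inf S \<le> t"
    by (auto intro: closed_contains_Inf cInf_lower)
  have "r0 \<notin> S"
    using l_profile[of r0] T l trap_profile_less[OF l T order_refl] unfolding S_def by auto
  moreover have "r0 \<le> Inf S" using TS by (simp add: S_def)
  ultimately have r0_T: "r0 < Inf S" using TS by (cases "Inf S = r0") auto
  have "profile l (Inf S) < b"
  proof (rule trap_profile_less[OF l T less_imp_le[OF r0_T]])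
    fix t assume "r0 < t" "t < Inf S"
    then show "l * profile l t < x0 * t" using Tle[of t] TS unfolding S_def by force
  qed
  then show False using l_profile[of "Inf S"] r0_T TS unfolding S_def by auto
qed

lemma trapped_imp_profile_less:
  assumes l: "l \<ge> 0" and "trapped b l" and r: "r \<ge> 0"
  shows "profile l r < b"
proof -
  obtain r0 k x0 where T: "trap_data b l r0 k x0" using \<open>trapped b l\<close> unfolding trapped_def by blast
  show ?thesis
  proof (cases "r \<le> r0")
    case True
    then show ?thesis
      using profile_mono[OF l r True] trap_profile_less[OF l T order_refl] by simp
  next
    case False
    then show ?thesis
      using trap_invariant[OF l T, of r] by (intro trap_profile_less[OF l T]) auto
  qed
qed

lemma phi_ge_near_0:
  assumes "c < phi 0"
  shows "\<exists>x0>0. \<forall>y\<in>{0..x0}. c \<le> phi y"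
proof -
  have "(phi \<longlongrightarrow> phi 0) (at 0 within {0..})"
    using continuous_on_phi by (simp add: continuous_on_def)
  then have "eventually (\<lambda>y. c < phi y) (at 0 within {0..})"
    using assms by (rule order_tendstoD)
  from eventually_at_within_imp_ball[OF this assms]
  obtain d where d: "d > 0" "\<forall>y\<in>{0..}. dist y 0 < d \<longrightarrow> c < phi y" by blast
  have "c \<le> phi y" if "y \<in> {0..d/2}" for y
    using d that by (auto simp: dist_real_def intro: less_imp_le)
  then show ?thesis using d(1) by (intro exI[of _ "d / 2"]) auto
qed

lemma profile_bounded_tendsto:
  assumes l: "l \<ge> 0" and bound: "\<And>r. r \<ge> 0 \<Longrightarrow> profile l r \<le> M"
  obtains L where "L \<le> M" "\<And>r. r \<ge> 0 \<Longrightarrow> profile l r \<le> L" "(profile l \<longlongrightarrow> L) at_top"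
proof
  define L where "L = (SUP r\<in>{0..}. profile l r)"
  have bdd: "bdd_above (profile l ` {0..})" by (rule bdd_aboveI[of _ M]) (use bound in auto)
  show "L \<le> M" unfolding L_def by (rule cSUP_least) (use bound in auto)
  show le_L: "profile l r \<le> L" if "r \<ge> 0" for r
    unfolding L_def by (rule cSUP_upper) (use bdd that in auto)
  show "(profile l \<longlongrightarrow> L) at_top"
  proof (rule order_tendstoI)
    fix a assume "a < L"
    then obtain r where r: "r \<ge> 0" "a < profile l r"
      using less_cSUP_iff[OF _ bdd] unfolding L_def by auto
    then show "\<forall>\<^sub>F x in at_top. a < profile l x"
      unfolding eventually_at_top_linorder
      using profile_mono[OF l r(1)] by (intro exI[of _ r]) (auto intro: less_le_trans)
  next
    fix a assume "L < a"
    then show "\<forall>\<^sub>F x in at_top. profile l x < a"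
      unfolding eventually_at_top_linorder using le_L
      by (intro exI[of _ 0]) (auto intro: le_less_trans)
  qed
qed

lemma trapped_if_tendsto:
  assumes l: "l \<ge> 0" and bound: "\<And>r. r \<ge> 0 \<Longrightarrow> profile l r \<le> L"
    and lim: "(profile l \<longlongrightarrow> L) at_top" and "L < b"
  shows "trapped b l"
proof -
  have L2: "L * phi 0 > 2" by (rule bounded_profile_imp_gt_2[OF l bound])
  then have "L > 0" using phi0_pos zero_less_mult_pos2[of L "phi 0"] by simp
  define k where "k = (L * phi 0 + 2) / 2"
  have k: "2 < k" "k < L * phi 0" using L2 by (auto simp: k_def)
  \<comment> \<open>\<open>profile l r0 \<ge> \<theta> * L\<close> and \<open>phi y \<ge> \<theta> * phi 0\<close> will give \<open>profile l r0 * phi y \<ge> k\<close>\<close>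
  obtain \<theta> where \<theta>: "0 < \<theta>" "\<theta> < 1" and \<theta>_k: "(\<theta> * L) * (\<theta> * phi 0) = k"
    using exists_sq_factor[of k "L * phi 0"] k by (auto simp: mult_ac)
  obtain x0 where x0: "x0 > 0" "\<And>y. y \<in> {0..x0} \<Longrightarrow> \<theta> * phi 0 \<le> phi y"
    using phi_ge_near_0[of "\<theta> * phi 0"] \<theta> phi0_pos by auto
  define e where "e = min ((1 - \<theta>) * L) (3 * (k - 2) * (b - L) / 8)"
  have "e > 0" using \<theta> \<open>L > 0\<close> k \<open>L < b\<close> by (simp add: e_def)
  have "filterlim (\<lambda>r::real. r / 2) at_top at_top"
    using filterlim_tendsto_pos_mult_at_top[OF tendsto_const[of "1/2"] _ filterlim_ident] by simp
  with lim have "((\<lambda>r. profile l (r / 2)) \<longlongrightarrow> L) at_top" by (rule filterlim_compose)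
  with \<open>e > 0\<close> have "eventually (\<lambda>r. L - e < profile l (r / 2) \<and> l * b / x0 < r \<and> 0 < r) at_top"
    by (intro eventually_conj order_tendstoD eventually_gt_at_top) auto
  then obtain r0 where half: "L - e < profile l (r0 / 2)" and "l * b / x0 < r0" and r0: "r0 > 0"
    by (auto simp: eventually_at_top_linorder)
  have mono: "profile l (r0 / 2) \<le> profile l r0" and "profile l r0 \<le> L"
    using profile_mono[OF l, of "r0 / 2" r0] bound[of r0] r0 by auto
  have "\<theta> * L \<le> L - e" by (simp add: e_def algebra_simps)
  then have "\<theta> * L \<le> profile l r0" using half mono by linarith
  then have "k \<le> profile l r0 * phi y" if "y \<in> {0..x0}" for y
    unfolding \<theta>_k[symmetric] using x0(2)[OF that] \<theta> mult_pos_pos[OF \<theta>(1) \<open>L > 0\<close>] phi0_pos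
    by (intro mult_mono) auto
  moreover have "profile l r0 + 8 * (profile l r0 - profile l (r0 / 2)) / (3 * (k - 2)) < b"
  proof -
    have "8 * (profile l r0 - profile l (r0 / 2)) / (3 * (k - 2)) < 8 * e / (3 * (k - 2))"
      using half \<open>profile l r0 \<le> L\<close> k by (intro divide_strict_right_mono) auto
    also have "\<dots> \<le> b - L"
      using k min.cobounded2[of "(1 - \<theta>) * L" "3 * (k - 2) * (b - L) / 8"]
      by (simp add: e_def field_simps)
    finally show ?thesis using \<open>profile l r0 \<le> L\<close> by simp
  qed
  moreover have "l * b < x0 * r0"
    using \<open>l * b / x0 < r0\<close> x0 by (simp add: pos_divide_less_eq mult.commute)
  ultimately show ?thesis unfolding trapped_def trap_data_def using r0 k x0 by blast
qed

subsection \<open>Dependence on the shooting parameter\<close>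

lemma profile_param_lipschitz:
  assumes r: "r \<ge> 0"
  shows "\<exists>C. C-lipschitz_on {0..L} (\<lambda>l. profile l r)"
proof -
  define R where "R = r + 1"
  have R: "R > 0" "r \<in> {0..R}" using r by (auto simp: R_def)
  define C where "C = r * (exp (bielecki_rate L R * R) * (2 * R^4 * lip_const (L * R)))"
  have "C-lipschitz_on {0..L} (\<lambda>l. profile l r)"
  proof (rule lipschitz_onI)
    show "C \<ge> 0" unfolding C_def using r R lip_const_nonneg by simp
    fix l m assume l: "l \<in> {0..L}" and m: "m \<in> {0..L}"
    have "profile l r - profile m r = r * (local_sol l R r - local_sol m R r)"
      using local_sol_eq_profile_mean[OF _ R(1) R(2)] l m by (simp add: profile_def algebra_simps)
    moreover have "\<bar>local_sol l R r - local_sol m R r\<bar>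
        \<le> exp (bielecki_rate L R * R) * (2 * R^4 * lip_const (L * R)) * \<bar>l - m\<bar>"
      using l m R by (intro abs_picard_fixed_diff_le local_sol_picard_fixed) auto
    ultimately show "dist (profile l r) (profile m r) \<le> C * dist l m"
      using r by (simp add: C_def dist_real_def abs_mult mult_left_mono mult.assoc)
  qed
  then show ?thesis by blast
qed

lemma profile_param_tendsto:
  assumes "l0 \<ge> 0" "r \<ge> 0"
  shows "((\<lambda>l. profile l r) \<longlongrightarrow> profile l0 r) (at l0 within {0..})"
proof -
  have "continuous_on {0..} (\<lambda>l. profile l r)"
    using profile_param_lipschitz[OF assms(2)] lipschitz_on_continuous_on
    by (intro continuous_on_atLeast_0I) blast
  then show ?thesis using assms(1) by (simp add: continuous_on_def)
qed

lemma trapped_eventually: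
  assumes l0: "l0 \<ge> 0" and "trapped b l0"
  shows "eventually (trapped b) (at l0 within {0..})"
proof -
  obtain r0 k x0 where T: "trap_data b l0 r0 k x0"
    using \<open>trapped b l0\<close> unfolding trapped_def by blast
  then have r0: "r0 > 0" and k: "k > 2" and x0: "x0 > 0"
    and ky: "\<And>y. y \<in> {0..x0} \<Longrightarrow> k \<le> profile l0 r0 * phi y"
    and B: "profile l0 r0 + 8 * (profile l0 r0 - profile l0 (r0/2)) / (3 * (k - 2)) < b"
    and xb: "l0 * b < x0 * r0"
    unfolding trap_data_def by auto
  define F where "F = at l0 within {0::real..}"
  \<comment> \<open>the trap condition at \<open>l0\<close> with constant \<open>k\<close> persists near \<open>l0\<close> with the constant \<open>k' m\<close>\<close>
  define k' where "k' m = k - \<bar>profile m r0 - profile l0 r0\<bar> * phi 0" for m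
  have lim_r0: "((\<lambda>m. profile m r0) \<longlongrightarrow> profile l0 r0) F"
    and lim_half: "((\<lambda>m. profile m (r0/2)) \<longlongrightarrow> profile l0 (r0/2)) F"
    unfolding F_def using l0 r0 by (intro profile_param_tendsto; simp)+
  then have lim_k: "(k' \<longlongrightarrow> k) F" unfolding k'_def by (auto intro!: tendsto_eq_intros)
  have k': "k' m \<le> profile m r0 * phi y" if "y \<in> {0..x0}" for m y
  proof -
    have "0 \<le> phi y" "phi y \<le> phi 0" using phi_nonneg phi_le_phi0 that by auto
    then have "(profile l0 r0 - profile m r0) * phi y \<le> \<bar>profile m r0 - profile l0 r0\<bar> * phi 0"
      by (intro mult_mono) auto
    then show ?thesis using ky[OF that] unfolding k'_def by (simp add: algebra_simps)
  qed
  have "eventually (\<lambda>m. k' m > 2) F" using order_tendstoD(1)[OF lim_k k] .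
  moreover have "eventually (\<lambda>m.
      profile m r0 + 8 * (profile m r0 - profile m (r0/2)) / (3 * (k' m - 2)) < b) F"
    using k lim_r0 lim_half lim_k
    by (intro order_tendstoD(2)[OF _ B]) (auto intro!: tendsto_eq_intros)
  moreover have "eventually (\<lambda>m. m * b < x0 * r0) F"
    unfolding F_def by (intro order_tendstoD(2)[OF _ xb]) (auto intro!: tendsto_eq_intros)
  moreover have "eventually (\<lambda>m. m \<ge> 0) F" unfolding F_def by (simp add: eventually_at_filter)
  ultimately have "eventually (\<lambda>m. trap_data b m r0 (k' m) x0) F"
  proof eventually_elim
    case (elim m)
    then show ?case unfolding trap_data_def using r0 x0 k' by auto
  qed
  then show ?thesis unfolding F_def trapped_def by (rule eventually_mono) blast
qed

subsection \<open>The shooting argument\<close>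

lemma profile_exceeds:
  "\<exists>l>0. profile l l > b"
proof -
  define s where "s = sqrt (\<bar>b\<bar> * exp A)"
  define l where "l = s + 1"
  have s: "s \<ge> 0" "s\<^sup>2 = \<bar>b\<bar> * exp A" unfolding s_def by simp_all
  then have "l > 0" unfolding l_def by simp
  have "s\<^sup>2 < l\<^sup>2" unfolding l_def using s(1) by (intro power_strict_mono) auto
  then have "\<bar>b\<bar> * exp A < l\<^sup>2" using s(2) by simp
  then have "b * exp A < l\<^sup>2"
    using mult_right_mono[OF abs_ge_self less_imp_le[OF exp_gt_zero], of b A] by linarith
  then have "b < l\<^sup>2 * exp (- A)" by (simp add: exp_minus field_simps)
  also have "\<dots> \<le> profile l l" using profile_ge[OF \<open>l > 0\<close>, of l] \<open>l > 0\<close> by simp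
  finally show ?thesis using \<open>l > 0\<close> by blast
qed

lemma profile_tendsto_if_not_trapped:
  assumes l: "l \<ge> 0" and bound: "\<And>r. r \<ge> 0 \<Longrightarrow> profile l r \<le> b" and "\<not> trapped b l"
  shows "(profile l \<longlongrightarrow> b) at_top"
proof -
  obtain L where L: "L \<le> b" "\<And>r. r \<ge> 0 \<Longrightarrow> profile l r \<le> L" "(profile l \<longlongrightarrow> L) at_top"
    using profile_bounded_tendsto[OF l bound] by blast
  have "\<not> L < b" using trapped_if_tendsto[OF l L(2,3), of b] \<open>\<not> trapped b l\<close> by blast
  then have "L = b" using L(1) by simp
  then show ?thesis using L(3) by simp
qed

lemma trapped_small_param:
  assumes "b > 4 / phi 0"
  shows "\<exists>l>0. trapped b l"
proof -
  obtain L where L: "L \<le> 4 / phi 0" "\<And>r. r \<ge> 0 \<Longrightarrow> profile 0 r \<le> L" "(profile 0 \<longlongrightarrow> L) at_top"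
    by (rule profile_bounded_tendsto[of 0 "4 / phi 0"]) (auto intro: profile_0_param_le)
  have "trapped b 0" by (rule trapped_if_tendsto[of 0 L]) (use L assms in auto)
  then obtain d where "d > 0" "\<forall>m\<in>{0..}. dist m 0 < d \<longrightarrow> trapped b m"
    using eventually_at_within_imp_ball[OF trapped_eventually] by blast
  then show ?thesis by (intro exI[of _ "d / 2"]) (auto simp: dist_real_def)
qed

lemma exists_param_profile_tendsto:
  assumes b: "b > 4 / phi 0"
  shows "\<exists>l>0. (profile l \<longlongrightarrow> b) at_top"
proof -
  define S1 where "S1 = {l. l > 0 \<and> (\<exists>r\<ge>0. profile l r > b)}"
  define S2 where "S2 = {l. l > 0 \<and> trapped b l}"
  have "open S1" unfolding S1_def
  proof (rule open_Collect_pos)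
    fix l assume "l > 0" "\<exists>r\<ge>0. profile l r > b"
    then obtain r where "r \<ge> 0" "profile l r > b" by blast
    then have "eventually (\<lambda>m. profile m r > b) (at l within {0..})"
      using \<open>l > 0\<close> by (intro order_tendstoD(1)[OF profile_param_tendsto]) auto
    then show "eventually (\<lambda>m. \<exists>r\<ge>0. profile m r > b) (at l within {0..})"
      using \<open>r \<ge> 0\<close> by (auto elim: eventually_mono)
  qed
  moreover have "open S2"
    unfolding S2_def by (rule open_Collect_pos) (auto intro: trapped_eventually)
  moreover have "S1 \<inter> S2 \<inter> {0<..} = {}"
  proof -
    have False if "l > 0" "r \<ge> 0" "profile l r > b" "trapped b l" for l r
      using trapped_imp_profile_less[of l b r] that by simp
    then show ?thesis unfolding S1_def S2_def by blast
  qed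
  moreover have "S1 \<inter> {0<..} \<noteq> {}"
    using profile_exceeds[of b] unfolding S1_def by (auto intro: less_imp_le)
  moreover have "S2 \<inter> {0<..} \<noteq> {}"
    using trapped_small_param[OF b] unfolding S2_def by auto
  ultimately obtain l where "l > 0" "l \<notin> S1" "l \<notin> S2"
    using connectedD[OF connected_Ioi, of S1 S2 0] by blast
  then have "(profile l \<longlongrightarrow> b) at_top"
    by (intro profile_tendsto_if_not_trapped) (auto simp: S1_def S2_def not_less)
  then show ?thesis using \<open>l > 0\<close> by blast
qed

lemma rescaled_profile_has_derivative:
  assumes l: "l > 0" and r: "r \<ge> 0"
  shows "((\<lambda>r. profile l (l * r)) has_real_derivative 2 * l * l * r * profile_damping l (l * r))
    (at r within {0..})"
proof -
  have outer: "(profile l has_real_derivative 2 * (l * r) * profile_damping l (l * r))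
      (at (l * r) within (\<lambda>r. l * r) ` {0..})"
    using l r by (intro DERIV_subset[OF profile_has_derivative_atLeast]) auto
  have inner: "((\<lambda>r. l * r) has_real_derivative l) (at r within {0..})"
    by (auto intro!: derivative_eq_intros)
  show ?thesis
    using DERIV_image_chain[OF outer inner] by (simp add: o_def algebra_simps)
qed

lemma rescaled_derivative_has_derivative:
  assumes l: "l > 0" and r: "r > 0"
  defines "v \<equiv> profile l (l * r)"
  shows "((\<lambda>r. 2 * l * l * r * profile_damping l (l * r)) has_real_derivative
    2 * l * l * profile_damping l (l * r) * (1 - v * phi (v / r))) (at r)"
proof -
  have "l * r * profile_rate l (l * r) = v * phi (v / r)"
    using profile_rate_eq[of "l * r" l] l r unfolding v_def by simp
  then show ?thesis
    using l r by (auto intro!: derivative_eq_intros DERIV_chain2[OF profile_damping_has_derivative]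
        simp: algebra_simps)
qed

lemma continuous_on_rescaled:
  assumes l: "l > 0"
  shows "continuous_on {0..} (\<lambda>r. profile l (l * r))"
    and "continuous_on {0..} (\<lambda>r. profile_damping l (l * r))"
  using l by (intro continuous_on_compose2[OF continuous_on_profile] continuous_on_compose2[OF
        continuous_on_profile_damping] continuous_intros; force)+

lemma continuous_on_rescaled_second_derivative:
  assumes l: "l > 0"
  shows "continuous_on {0<..}
    (\<lambda>r. 2 * l * l * profile_damping l (l * r) * (1 - profile l (l * r) * phi (profile l (l * r) / r)))"
proof -
  have "{0<..} \<subseteq> {0::real..}" by auto
  then have U: "continuous_on {0<..} (\<lambda>r. profile l (l * r))"
    and E: "continuous_on {0<..} (\<lambda>r. profile_damping l (l * r))"
    using continuous_on_subset continuous_on_rescaled[OF l] by blast+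
  have "continuous_on {0<..} (\<lambda>r. phi (profile l (l * r) / r))"
  proof (rule continuous_on_compose2[OF continuous_on_phi])
    show "continuous_on {0<..} (\<lambda>r. profile l (l * r) / r)"
      using U by (intro continuous_on_divide continuous_on_id) auto
    show "(\<lambda>r. profile l (l * r) / r) ` {0<..} \<subseteq> {0..}"
      using profile_bounds l by (simp add: image_subset_iff)
  qed
  with U E show ?thesis by (intro continuous_intros)
qed

lemma shooting_solution:
  assumes b: "b > 4 / phi 0"
  shows "\<exists>v v' v'' :: real \<Rightarrow> real.
           (\<forall>r\<ge>0. (v has_real_derivative v' r) (at r within {0..}))
         \<and> continuous_on {0..} v'
         \<and> (\<forall>r>0. (v' has_real_derivative v'' r) (at r))
         \<and> continuous_on {0<..} v''
         \<and> v 0 = 0 \<and> v' 0 = 0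
         \<and> (\<forall>r>0. v r \<ge> 0 \<and> r * v'' r = v' r * (1 - v r * phi (v r / r)))
         \<and> (v \<longlongrightarrow> b) at_top"
proof -
  obtain l where l: "l > 0" and lim: "(profile l \<longlongrightarrow> b) at_top"
    using exists_param_profile_tendsto[OF b] by blast
  define v where "v r = profile l (l * r)" for r
  define v' where "v' r = 2 * l * l * r * profile_damping l (l * r)" for r
  define v'' where "v'' r = 2 * l * l * profile_damping l (l * r) * (1 - v r * phi (v r / r))" for r
  have cont_v': "continuous_on {0..} v'"
    unfolding v'_def using continuous_on_rescaled(2)[OF l] by (intro continuous_intros)
  have cont_v'': "continuous_on {0<..} v''"
    unfolding v''_def v_def by (rule continuous_on_rescaled_second_derivative[OF l])
  have deriv_v: "\<forall>r\<ge>0. (v has_real_derivative v' r) (at r within {0..})"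
    unfolding v_def v'_def using rescaled_profile_has_derivative[OF l] by blast
  have deriv_v': "\<forall>r>0. (v' has_real_derivative v'' r) (at r)"
    unfolding v'_def v''_def v_def using rescaled_derivative_has_derivative[OF l] by blast
  have ode: "\<forall>r>0. v r \<ge> 0 \<and> r * v'' r = v' r * (1 - v r * phi (v r / r))"
    using profile_bounds l by (simp add: v_def v'_def v''_def mult_ac)
  have lim_v: "(v \<longlongrightarrow> b) at_top"
  proof -
    have "filterlim (\<lambda>r. l * r) at_top at_top"
      by (rule filterlim_tendsto_pos_mult_at_top[OF tendsto_const l filterlim_ident])
    from filterlim_compose[OF lim this] show ?thesis by (simp add: v_def[abs_def] o_def)
  qed
  have "v 0 = 0" "v' 0 = 0" by (simp_all add: v_def v'_def profile_0)
  show ?thesis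
    by (rule exI[of _ v], rule exI[of _ v'], rule exI[of _ v''])
      (use cont_v' cont_v'' deriv_v deriv_v' ode lim_v \<open>v 0 = 0\<close> \<open>v' 0 = 0\<close> in blast)
qed

end

theorem proposition3p3:
  fixes \<phi> :: "real \<Rightarrow> real" and A_inf b :: real
  assumes phi_C1: "\<exists>\<phi>'. (\<forall>r\<ge>0. (\<phi> has_real_derivative \<phi>' r) (at r within {0..}))
                        \<and> continuous_on {0..} \<phi>'"
    and phi_nonneg: "\<forall>r\<ge>0. \<phi> r \<ge> 0"
    and phi_max: "\<forall>r\<ge>0. \<phi> r \<le> \<phi> 0"
    and phi0_pos: "\<phi> 0 > 0"
    and A_bound: "\<forall>r\<ge>0. \<bar>r * \<phi> r\<bar> \<le> A_inf"
    and A_attained: "\<exists>r\<ge>0. \<bar>r * \<phi> r\<bar> = A_inf"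
    and A_pos: "A_inf > 0"
    and b_gt: "b > 4 / \<phi> 0"
  shows "\<exists>v v' v'' :: real \<Rightarrow> real.
           (\<forall>r\<ge>0. (v has_real_derivative v' r) (at r within {0..}))
         \<and> continuous_on {0..} v'
         \<and> (\<forall>r>0. (v' has_real_derivative v'' r) (at r))
         \<and> continuous_on {0<..} v''
         \<and> v 0 = 0 \<and> v' 0 = 0
         \<and> (\<forall>r>0. v r \<ge> 0 \<and> r * v'' r = v' r * (1 - v r * \<phi> (v r / r)))
         \<and> (v \<longlongrightarrow> b) at_top"
proof -
  \<comment> \<open>only the upper bound \<open>A_bound\<close> is used\<close>
  obtain \<phi>' where "\<forall>r\<ge>0. (\<phi> has_real_derivative \<phi>' r) (at r within {0..})"
    and "continuous_on {0..} \<phi>'"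
    using phi_C1 by blast
  then have "\<exists>M. M-lipschitz_on {0..S} \<phi>" for S by (intro C1_imp_lipschitz_on_Icc) auto
  then interpret shooting \<phi> A_inf
    using phi_nonneg phi_max phi0_pos A_bound by unfold_locales (auto simp: abs_le_iff)
  show ?thesis using shooting_solution[OF b_gt] .
qed

end
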